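(* Assume the standing setting and the approximation setting of the context, with the stability conditions (S1), (S2) and (S-seq) and the consistency conditions (C1), (C2). Then the Strang splitting with spatial approximation is convergent at every time level $t>0$: for every $x\in X$, $$\lim_{n,m\to\infty}J_m[T_m(t/2n)S_m(t/n)T_m(t/2n)]^nP_mx=U(t)x,$$ i.e. for every $\varepsilon>0$ there is $N$ such that the norm of the difference is at most $\varepsilon$ for all $n,m\ge N$.
   Context: Standing setting: $X$ is a Banach space; $A$, $B$ are closed densely defined operators generating strongly continuous semigroups $(T(t))_{t\ge0}$, $(S(t))_{t\ge0}$ on $X$; the closure $\overline{A+B}$ satisfies $D(A)\cap D(B)\subset D(\overline{A+B})$ and generates a strongly continuous semigroup $(U(t))_{t\ge0}$. Approximation setting: $X_m$ ($m\in\mathbb{N}$) are Banach spaces, $P_m:X\to X_m$, $J_m:X_m\to X$ bounded linear operators with $P_mJ_m=I_m$, $J_mP_mx\to x$ for all $x\in X$, and $\|J_m\|\le M_J$, $\|P_m\|\le M_P$ for all $m$. Operators $A_m$, $B_m$ generate strongly continuous semigroups $(T_m(t))_{t\ge0}$, $(S_m(t))_{t\ge0}$ on $X_m$. Stability: (S1) there are $M_T\ge1$, $\omega_T$ with $\|T(h)\|,\|T_m(h)\|\le M_Te^{\omega_Th}$ for all $h>0$, $m$; (S2) there are $M_S\ge1$, $\omega_S$ with $\|S(h)\|,\|S_m(h)\|\le M_Se^{\omega_Sh}$ for all $h>0$, $m$; (S-seq) there are $M\ge1$, $\omega\in\mathbb{R}$ with $\|[S_m(t/n)T_m(t/n)]^k\|\le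 Me^{k\omega t/n}$ for all $t\ge0$, $k,n,m\in\mathbb{N}$. Consistency: (C1) $J_mA_mP_mx\to Ax$ for all $x\in D(A)$; (C2) $J_mB_mP_mx\to Bx$ for all $x\in D(B)$. *)

theory Defs
  imports "HOL-Analysis.Analysis"
begin

text \<open>Operators on a closed linear subspace V of a real Banach space.
  An unbounded operator is a pair (domain D, map A); only values on D matter.\<close>

definition closed_subspace :: "'b::banach set \<Rightarrow> bool" where
  "closed_subspace V \<longleftrightarrow> subspace V \<and> closed V"

definition bounded_op_on :: "'a::real_normed_vector set \<Rightarrow> 'b::real_normed_vector set \<Rightarrow> real \<Rightarrow> ('a \<Rightarrow> 'b) \<Rightarrow> bool" where
  "bounded_op_on V W K L \<longleftrightarrow>
     (\<forall>x\<in>V. L x \<in> W) \<and>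
     (\<forall>x\<in>V. \<forall>y\<in>V. L (x + y) = L x + L y) \<and>
     (\<forall>c. \<forall>x\<in>V. L (c *\<^sub>R x) = c *\<^sub>R L x) \<and>
     (\<forall>x\<in>V. norm (L x) \<le> K * norm x)"

definition C0_semigroup_on :: "'a::banach set \<Rightarrow> (real \<Rightarrow> 'a \<Rightarrow> 'a) \<Rightarrow> bool" where
  "C0_semigroup_on V T \<longleftrightarrow>
     (\<forall>t\<ge>0. \<exists>K. bounded_op_on V V K (T t)) \<and>
     (\<forall>x\<in>V. T 0 x = x) \<and>
     (\<forall>s\<ge>0. \<forall>t\<ge>0. \<forall>x\<in>V. T (s + t) x = T s (T t x)) \<and>
     (\<forall>x\<in>V. continuous_on {0..} (\<lambda>t. T t x))"

definition generator_on :: "'a::banach set \<Rightarrow> (real \<Rightarrow> 'a \<Rightarrow> 'a) \<Rightarrow> 'a set \<Rightarrow> ('a \<Rightarrow> 'a) \<Rightarrow> bool" where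
  "generator_on V T D A \<longleftrightarrow>
     D = {x\<in>V. \<exists>y. ((\<lambda>h. (1 / h) *\<^sub>R (T h x - x)) \<longlongrightarrow> y) (at_right 0)} \<and>
     (\<forall>x\<in>D. ((\<lambda>h. (1 / h) *\<^sub>R (T h x - x)) \<longlongrightarrow> A x) (at_right 0))"

definition generates_on :: "'a::banach set \<Rightarrow> 'a set \<Rightarrow> ('a \<Rightarrow> 'a) \<Rightarrow> (real \<Rightarrow> 'a \<Rightarrow> 'a) \<Rightarrow> bool" where
  "generates_on V D A T \<longleftrightarrow> C0_semigroup_on V T \<and> generator_on V T D A"

definition graph_of :: "'a set \<Rightarrow> ('a \<Rightarrow> 'a) \<Rightarrow> ('a \<times> 'a) set" where
  "graph_of D A = {(x, A x) | x. x \<in> D}"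

definition closed_operator :: "'a::banach set \<Rightarrow> ('a \<Rightarrow> 'a) \<Rightarrow> bool" where
  "closed_operator D A \<longleftrightarrow> closed (graph_of D A)"

definition densely_defined :: "'a::banach set \<Rightarrow> bool" where
  "densely_defined D \<longleftrightarrow> closure D = UNIV"

definition is_operator_closure :: "'a::banach set \<Rightarrow> ('a \<Rightarrow> 'a) \<Rightarrow> 'a set \<Rightarrow> ('a \<Rightarrow> 'a) \<Rightarrow> bool" where
  "is_operator_closure D F DC C \<longleftrightarrow> graph_of DC C = closure (graph_of D F)"

end

theory Submission
  imports Defs
begin

text \<open>The proof is a Chernoff-type argument. One Strang step \<open>F = T(\<tau>/2) S(\<tau>) T(\<tau>/2)\<close> on the
  approximating space V m is power bounded by the stability assumption (S-seq), and by the
  consistency assumptions (C1), (C2) its difference quotient \<open>(F - I)/\<tau>\<close> approximates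
  A + B on \<open>DA \<inter> DB\<close>. Instead of a resolvent of the generator we use the discrete resolvent
  \<open>Rm = (lam - (F - I)/\<tau>)\<^sup>-\<^sup>1\<close>, given by a Neumann series and bounded uniformly in \<tau>, m.
  Since \<open>DA \<inter> DB\<close> is a core for C (C is the closure of A + B), Rm (lam u - C u) approximates
  u for \<open>u \<in> DC\<close>. A telescoping sum along the exact orbit then shows convergence of
  \<open>Rm F\<^sup>n P\<close> for the dense set of orbit integrals \<open>\<integral>\<^sub>0\<^sup>r U(s) y ds\<close>, hence everywhere;
  removing Rm gives convergence on DC, density of DC gives convergence for all x, and the
  uniformly bounded embeddings J m carry the result back to X.\<close>

lemma bounded_op_in: "bounded_op_on V W K L \<Longrightarrow> x \<in> V \<Longrightarrow> L x \<in> W"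
  and bounded_op_add: "bounded_op_on V W K L \<Longrightarrow> x \<in> V \<Longrightarrow> y \<in> V \<Longrightarrow> L (x + y) = L x + L y"
  and bounded_op_scale: "bounded_op_on V W K L \<Longrightarrow> x \<in> V \<Longrightarrow> L (c *\<^sub>R x) = c *\<^sub>R L x"
  and bounded_op_norm: "bounded_op_on V W K L \<Longrightarrow> x \<in> V \<Longrightarrow> norm (L x) \<le> K * norm x"
  by (simp_all add: bounded_op_on_def)

lemma bounded_op_diff:
  assumes L: "bounded_op_on V W K L" and V: "subspace V" and xy: "x \<in> V" "y \<in> V"
  shows "L (x - y) = L x - L y"
proof -
  have "(-1) *\<^sub>R y \<in> V" using V xy by (simp add: subspace_neg)
  then have "L (x + (-1) *\<^sub>R y) = L x + (-1) *\<^sub>R L y"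
    using L xy bounded_op_add bounded_op_scale by metis
  then show ?thesis by simp
qed

lemma bounded_op_zero: "bounded_op_on V W K L \<Longrightarrow> subspace V \<Longrightarrow> L 0 = 0"
  using bounded_op_scale[of V W K L 0 0] by (simp add: subspace_0)

lemma bounded_op_nonneg: "bounded_op_on V W K L \<Longrightarrow> bounded_op_on V W (max K 0) L"
  unfolding bounded_op_on_def by (meson max.cobounded1 mult_right_mono norm_ge_zero order_trans)

lemma bounded_op_sum:
  assumes L: "bounded_op_on V W B L" and V: "subspace V" and a: "\<And>k. a k \<in> V"
  shows "L (\<Sum>k<(n::nat). a k) = (\<Sum>k<n. L (a k))"
proof (induction n)
  case 0 then show ?case using bounded_op_zero[OF L V] by simp
next
  case (Suc n)
  have "(\<Sum>k<n. a k) \<in> V" using V a by (intro subspace_sum) auto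
  then show ?case using Suc bounded_op_add[OF L _ a[of n]] by simp
qed

lemma bounded_op_sums:
  assumes L: "bounded_op_on V V B L" and V: "closed_subspace V" and a: "\<And>k. a k \<in> V"
    and s: "summable a"
  shows "(\<lambda>k. L (a k)) sums L (suminf a)"
proof -
  have sub: "subspace V" and clo: "closed V" using V by (auto simp: closed_subspace_def)
  have ps: "(\<lambda>n. \<Sum>k<n. a k) \<longlonglongrightarrow> suminf a" using summable_LIMSEQ[OF s] .
  have psV: "\<And>n. (\<Sum>k<n. a k) \<in> V" using a sub by (intro subspace_sum) auto
  have sV: "suminf a \<in> V" using Lim_in_closed_set[OF clo _ _ ps] psV by simp
  have "(\<lambda>n. norm ((\<Sum>k<n. a k) - suminf a)) \<longlonglongrightarrow> 0"
    using ps by (simp add: tendsto_norm_zero_iff LIM_zero)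
  then have z: "(\<lambda>n. max B 0 * norm ((\<Sum>k<n. a k) - suminf a)) \<longlonglongrightarrow> 0"
    by (rule tendsto_mult_right_zero)
  have "\<And>n. norm (L (\<Sum>k<n. a k) - L (suminf a)) \<le> max B 0 * norm ((\<Sum>k<n. a k) - suminf a)"
    using bounded_op_diff[OF L sub psV sV] bounded_op_norm[OF bounded_op_nonneg[OF L]] psV sV sub
    by (metis subspace_diff)
  then have "(\<lambda>n. L (\<Sum>k<n. a k) - L (suminf a)) \<longlonglongrightarrow> 0"
    by (intro Lim_null_comparison[OF _ z]) auto
  then have "(\<lambda>n. L (\<Sum>k<n. a k)) \<longlonglongrightarrow> L (suminf a)" by (simp add: LIM_zero_iff)
  then show ?thesis unfolding sums_def using bounded_op_sum[OF L sub a] by simp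
qed

lemma has_vector_derivative_iff_quotient:
  fixes f :: "real \<Rightarrow> 'b::real_normed_vector"
  shows "(f has_vector_derivative v) (at s within S) \<longleftrightarrow>
         ((\<lambda>r. (1 / (r - s)) *\<^sub>R (f r - f s)) \<longlongrightarrow> v) (at s within S)"
proof -
  have norms_eq: "eventually (\<lambda>r. norm ((1 / norm (r - s)) *\<^sub>R (f r - (f s + (r - s) *\<^sub>R v))) =
      norm ((1 / (r - s)) *\<^sub>R (f r - f s) - v)) (at s within S)"
    unfolding eventually_at_filter
  proof (intro always_eventually allI impI)
    fix r assume "r \<noteq> s"
    then have "(1 / (r - s)) *\<^sub>R (f r - f s) - v = (1 / (r - s)) *\<^sub>R (f r - (f s + (r - s) *\<^sub>R v))"
      by (simp add: scaleR_diff_right scaleR_add_right)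
    then show "norm ((1 / norm (r - s)) *\<^sub>R (f r - (f s + (r - s) *\<^sub>R v))) =
      norm ((1 / (r - s)) *\<^sub>R (f r - f s) - v)" by simp
  qed
  have "(f has_vector_derivative v) (at s within S) \<longleftrightarrow>
      ((\<lambda>r. norm ((1 / norm (r - s)) *\<^sub>R (f r - (f s + (r - s) *\<^sub>R v)))) \<longlongrightarrow> 0) (at s within S)"
    unfolding has_vector_derivative_def has_derivative_within tendsto_norm_zero_iff
    by (simp add: bounded_linear_scaleR_left)
  also have "\<dots> \<longleftrightarrow> ((\<lambda>r. norm ((1 / (r - s)) *\<^sub>R (f r - f s) - v)) \<longlongrightarrow> 0) (at s within S)"
    by (rule tendsto_cong[OF norms_eq])
  finally show ?thesis by (simp add: tendsto_norm_zero_iff LIM_zero_iff)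
qed

lemma has_integral_deviation_bound:
  fixes f :: "real \<Rightarrow> 'b::banach"
  assumes "(f has_integral i) {a..b}" "a \<le> b" "\<And>s. s \<in> {a..b} \<Longrightarrow> norm (f s - z) \<le> e"
  shows "norm (i - (b - a) *\<^sub>R z) \<le> (b - a) * e"
proof -
  have "((\<lambda>s. f s - z) has_integral (i - (b - a) *\<^sub>R z)) (cbox a b)"
    using has_integral_diff[OF assms(1) has_integral_const_real[of z a b]] assms(2) by (simp add: box_real)
  from has_integral_bound[OF _ this, of e] assms(2,3) order_trans[OF norm_ge_zero assms(3)[of a]]
  show ?thesis by (simp add: mult.commute)
qed

lemma at_left_to_0: "at_left a = filtermap (\<lambda>x. a - x) (at_right 0)" for a :: real
  using at_left_minus[of a] at_right_to_0[of "-a"] by (simp add: filtermap_filtermap)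

lemma filterlim_at_left_to_0:
  "filterlim f F (at_left a) \<longleftrightarrow> filterlim (\<lambda>x. f (a - x)) F (at_right 0)" for a :: real
  unfolding filterlim_def filtermap_filtermap at_left_to_0[of a] ..

lemma eventually_at_right_0_lt: "d > 0 \<Longrightarrow> eventually (\<lambda>x::real. 0 < x \<and> x < d) (at_right 0)"
  unfolding eventually_at_right_field by auto

locale semigroup_on =
  fixes V :: "'b::banach set" and D :: "'b set" and A :: "'b \<Rightarrow> 'b" and T :: "real \<Rightarrow> 'b \<Rightarrow> 'b"
  assumes V: "closed_subspace V" and gen: "generates_on V D A T"
begin

lemma sub: "subspace V" and clo: "closed V" using V by (auto simp: closed_subspace_def)

lemma T_bounded_op: "0 \<le> s \<Longrightarrow> \<exists>L\<ge>0. bounded_op_on V V L (T s)"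
  using gen bounded_op_nonneg unfolding generates_on_def C0_semigroup_on_def by (meson max.cobounded2)

lemma T_in: "0 \<le> s \<Longrightarrow> y \<in> V \<Longrightarrow> T s y \<in> V"
  using T_bounded_op bounded_op_in by blast
lemma T_add: "0 \<le> s \<Longrightarrow> y \<in> V \<Longrightarrow> z \<in> V \<Longrightarrow> T s (y + z) = T s y + T s z"
  using T_bounded_op bounded_op_add by blast
lemma T_scale: "0 \<le> s \<Longrightarrow> y \<in> V \<Longrightarrow> T s (c *\<^sub>R y) = c *\<^sub>R T s y"
  using T_bounded_op bounded_op_scale by blast
lemma T_diff: "0 \<le> s \<Longrightarrow> y \<in> V \<Longrightarrow> z \<in> V \<Longrightarrow> T s (y - z) = T s y - T s z"
  using T_bounded_op bounded_op_diff[OF _ sub] by blast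

lemma T_zero: "y \<in> V \<Longrightarrow> T 0 y = y"
  and T_semigroup: "0 \<le> s \<Longrightarrow> 0 \<le> r \<Longrightarrow> y \<in> V \<Longrightarrow> T (s + r) y = T s (T r y)"
  and T_orbit_continuous: "y \<in> V \<Longrightarrow> continuous_on {0..} (\<lambda>s. T s y)"
  using gen unfolding generates_on_def C0_semigroup_on_def by blast+

lemma domain_eq: "D = {x\<in>V. \<exists>y. ((\<lambda>h. (1 / h) *\<^sub>R (T h x - x)) \<longlongrightarrow> y) (at_right 0)}"
  and generator_limit: "y \<in> D \<Longrightarrow> ((\<lambda>h. (1 / h) *\<^sub>R (T h y - y)) \<longlongrightarrow> A y) (at_right 0)"
  using gen unfolding generates_on_def generator_on_def by blast+

lemma domain_sub: "y \<in> D \<Longrightarrow> y \<in> V" using domain_eq by blast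

lemma quotient_in: "y \<in> V \<Longrightarrow> 0 \<le> h \<Longrightarrow> (1 / h) *\<^sub>R (T h y - y) \<in> V"
  using T_in sub by (auto intro!: subspace_scale subspace_diff)

lemma A_in: "y \<in> D \<Longrightarrow> A y \<in> V"
proof -
  assume y: "y \<in> D"
  have "eventually (\<lambda>h. (1 / h) *\<^sub>R (T h y - y) \<in> V) (at_right (0::real))"
    unfolding eventually_at_right_field using y domain_sub quotient_in by (intro exI[of _ 1]) auto
  then show ?thesis using Lim_in_closed_set[OF clo _ _ generator_limit[OF y]] by simp
qed

lemma T_tendsto:
  assumes s: "0 \<le> s" and z: "z \<in> V" and q: "(q \<longlongrightarrow> z) F" and ev: "eventually (\<lambda>h. q h \<in> V) F"
  shows "((\<lambda>h. T s (q h)) \<longlongrightarrow> T s z) F"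
proof -
  obtain L where L: "L \<ge> 0" "bounded_op_on V V L (T s)" using T_bounded_op[OF s] by blast
  have "((\<lambda>h. norm (q h - z)) \<longlongrightarrow> 0) F" using q by (simp add: tendsto_norm_zero_iff LIM_zero)
  then have "((\<lambda>h. L * norm (q h - z)) \<longlongrightarrow> 0) F" by (rule tendsto_mult_right_zero)
  moreover have "eventually (\<lambda>h. norm (T s (q h) - T s z) \<le> L * norm (q h - z)) F"
    using ev proof eventually_elim
    case (elim h)
    then show ?case using T_diff[OF s elim z] bounded_op_norm[OF L(2)] sub z by (metis subspace_diff)
  qed
  ultimately have "((\<lambda>h. T s (q h) - T s z) \<longlongrightarrow> 0) F" by (rule Lim_null_comparison[rotated])
  then show ?thesis by (simp add: LIM_zero_iff)
qed

lemma orbit_quotient_right: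
  assumes y: "y \<in> D" and s: "0 \<le> s"
  shows "((\<lambda>h. (1 / h) *\<^sub>R (T (s + h) y - T s y)) \<longlongrightarrow> T s (A y)) (at_right 0)"
proof -
  have yV: "y \<in> V" using domain_sub y .
  have ev: "eventually (\<lambda>h. (1 / h) *\<^sub>R (T h y - y) \<in> V) (at_right (0::real))"
    unfolding eventually_at_right_field using yV quotient_in by (intro exI[of _ 1]) auto
  have "((\<lambda>h. T s ((1 / h) *\<^sub>R (T h y - y))) \<longlongrightarrow> T s (A y)) (at_right 0)"
    by (rule T_tendsto[OF s A_in[OF y] generator_limit[OF y] ev])
  moreover have "eventually (\<lambda>h. T s ((1 / h) *\<^sub>R (T h y - y)) = (1 / h) *\<^sub>R (T (s + h) y - T s y))
      (at_right (0::real))"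
    unfolding eventually_at_right_field
  proof (intro exI[of _ 1] conjI allI impI)
    fix h :: real assume h: "0 < h" "h < 1"
    then show "T s ((1 / h) *\<^sub>R (T h y - y)) = (1 / h) *\<^sub>R (T (s + h) y - T s y)"
      using T_semigroup[of s h y] T_scale T_diff T_in s yV sub by (simp add: subspace_diff)
  qed simp
  ultimately show ?thesis by (rule Lim_transform_eventually)
qed

lemma domain_invariant:
  assumes y: "y \<in> D" and a: "0 \<le> a"
  shows "T a y \<in> D \<and> A (T a y) = T a (A y)"
proof -
  have yV: "y \<in> V" using domain_sub y .
  have "eventually (\<lambda>h. (1 / h) *\<^sub>R (T (a + h) y - T a y) = (1 / h) *\<^sub>R (T h (T a y) - T a y))
      (at_right (0::real))"
    unfolding eventually_at_right_field
    using T_semigroup[of _ a y] a yV by (intro exI[of _ 1]) (auto simp: add.commute)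
  with orbit_quotient_right[OF y a]
  have lim: "((\<lambda>h. (1 / h) *\<^sub>R (T h (T a y) - T a y)) \<longlongrightarrow> T a (A y)) (at_right 0)"
    by (rule Lim_transform_eventually)
  have inD: "T a y \<in> D" using domain_eq lim T_in[OF a yV] by blast
  show ?thesis using inD tendsto_unique[OF _ generator_limit[OF inD] lim] by simp
qed

end

locale bounded_semigroup_on = semigroup_on +
  fixes K w :: real
  assumes K1: "K \<ge> 1"
    and bound: "\<And>h y. h > 0 \<Longrightarrow> y \<in> V \<Longrightarrow> norm (T h y) \<le> K * exp (w * h) * norm y"
begin

lemma growth_ge_1: "0 \<le> b \<Longrightarrow> K * exp (\<bar>w\<bar> * b) \<ge> 1"
  using K1 mult_mono[of 1 K 1 "exp (\<bar>w\<bar> * b)"] by simp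

lemma T_bound: "0 \<le> s \<Longrightarrow> s \<le> b \<Longrightarrow> y \<in> V \<Longrightarrow> norm (T s y) \<le> K * exp (\<bar>w\<bar> * b) * norm y"
proof -
  assume s: "0 \<le> s" "s \<le> b" and y: "y \<in> V"
  show ?thesis
  proof (cases "s = 0")
    case True
    then show ?thesis using T_zero[OF y] growth_ge_1[of b] s
      by (simp add: mult_le_cancel_right1)
  next
    case False
    then have "norm (T s y) \<le> K * exp (w * s) * norm y" using bound s y by simp
    also have "\<dots> \<le> K * exp (\<bar>w\<bar> * b) * norm y"
    proof -
      have "w * s \<le> \<bar>w\<bar> * b" using s
        by (metis abs_ge_self abs_ge_zero mult_mono order_trans mult_right_mono)
      then show ?thesis using K1 by (intro mult_right_mono mult_left_mono) auto
    qed
    finally show ?thesis .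
  qed
qed

text \<open>Left difference quotients of an orbit starting in D; here the local uniform bound
  on T is needed to control \<open>T (s - h)\<close> applied to a converging quotient.\<close>
lemma orbit_quotient_left:
  assumes y: "y \<in> D" and s: "0 < s"
  shows "((\<lambda>h. (1 / h) *\<^sub>R (T s y - T (s - h) y)) \<longlongrightarrow> T s (A y)) (at_right 0)"
proof -
  have yV: "y \<in> V" using domain_sub y .
  have AyV: "A y \<in> V" using A_in y .
  let ?q = "\<lambda>h. (1 / h) *\<^sub>R (T h y - y)"
  let ?L = "K * exp (\<bar>w\<bar> * s)"
  have lim_shift: "((\<lambda>h. T (s - h) (A y)) \<longlongrightarrow> T s (A y)) (at_right 0)"
  proof (rule continuous_on_tendsto_compose[OF T_orbit_continuous[OF AyV], where g = "\<lambda>h. s - h"])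
    show "((\<lambda>h. s - h) \<longlongrightarrow> s) (at_right 0)" by (rule tendsto_eq_intros | simp)+
    show "\<forall>\<^sub>F x in at_right 0. s - x \<in> {0..}"
      using eventually_at_right_0_lt[OF s] by eventually_elim auto
  qed (use s in simp)
  have lim_error: "((\<lambda>h. T (s - h) (?q h - A y)) \<longlongrightarrow> 0) (at_right 0)"
  proof -
    have "((\<lambda>h. norm (?q h - A y)) \<longlongrightarrow> 0) (at_right 0)"
      using generator_limit[OF y] by (simp add: tendsto_norm_zero_iff LIM_zero)
    then have "((\<lambda>h. ?L * norm (?q h - A y)) \<longlongrightarrow> 0) (at_right 0)"
      by (rule tendsto_mult_right_zero)
    moreover have "eventually (\<lambda>h. norm (T (s - h) (?q h - A y)) \<le> ?L * norm (?q h - A y)) (at_right 0)"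
      using eventually_at_right_0_lt[OF s] proof eventually_elim
      case (elim h)
      then show ?case using T_bound[of "s - h" s] quotient_in[OF yV, of h] AyV sub
        by (simp add: subspace_diff)
    qed
    ultimately show ?thesis by (rule Lim_null_comparison[rotated])
  qed
  have "eventually (\<lambda>h. T (s - h) (?q h - A y) + T (s - h) (A y) = (1 / h) *\<^sub>R (T s y - T (s - h) y))
      (at_right 0)"
    using eventually_at_right_0_lt[OF s] proof eventually_elim
    case (elim h)
    then have h: "0 < h" "h < s" by auto
    have "T (s - h) (?q h - A y) + T (s - h) (A y) = T (s - h) (?q h)"
      using T_diff[of "s - h" "?q h" "A y"] quotient_in[OF yV, of h] AyV h by simp
    also have "\<dots> = (1 / h) *\<^sub>R (T (s - h) (T h y) - T (s - h) y)"
      using T_scale T_diff T_in yV h sub by (simp add: subspace_diff)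
    also have "T (s - h) (T h y) = T s y" using T_semigroup[of "s - h" h y] h yV by simp
    finally show ?case .
  qed
  with tendsto_add[OF lim_error lim_shift] show ?thesis
    by (simp add: Lim_transform_eventually)
qed

lemma orbit_derivative:
  assumes y: "y \<in> D" and s: "0 \<le> s"
  shows "((\<lambda>r. T r y) has_vector_derivative T s (A y)) (at s within {0..})"
proof -
  have right: "((\<lambda>r. (1 / (r - s)) *\<^sub>R (T r y - T s y)) \<longlongrightarrow> T s (A y)) (at_right s)"
    unfolding filterlim_at_right_to_0[of _ _ s] using orbit_quotient_right[OF y s]
    by (simp add: add.commute)
  show ?thesis
  proof (cases "s = 0")
    case True
    then show ?thesis using right
      by (simp add: has_vector_derivative_iff_quotient at_within_Ici_at_right)
  next
    case False
    then have "s > 0" using s by simp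
    then have "((\<lambda>r. (1 / (r - s)) *\<^sub>R (T r y - T s y)) \<longlongrightarrow> T s (A y)) (at_left s)"
      unfolding filterlim_at_left_to_0[of _ _ s] using orbit_quotient_left[OF y]
      by (simp add: scaleR_diff_right)
    with right have "((\<lambda>r. T r y) has_vector_derivative T s (A y)) (at s)"
      by (simp add: has_vector_derivative_iff_quotient filterlim_split_at)
    then show ?thesis by (rule has_vector_derivative_at_within)
  qed
qed

lemma increment_estimate:
  assumes y: "y \<in> D" and h: "0 < h" and b: "\<And>s. s \<in> {0..h} \<Longrightarrow> norm (T s (A y) - z) \<le> e"
  shows "norm (T h y - y - h *\<^sub>R z) \<le> h * e"
proof -
  have "((\<lambda>s. T s (A y)) has_integral (T h y - T 0 y)) {0..h}"
    using h by (intro fundamental_theorem_of_calculus)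
      (auto intro!: has_vector_derivative_within_subset[OF orbit_derivative[OF y]])
  then show ?thesis
    using has_integral_deviation_bound[of _ _ 0 h z e] T_zero[OF domain_sub[OF y]] h b by simp
qed

end

text \<open>The orbit integrals \<open>\<integral>\<^sub>0\<^sup>r T s y ds\<close> lie in the domain,
  form a dense set, and satisfy a first-order estimate uniformly along their orbits; these
  replace a core of "smooth" vectors in the convergence proof.\<close>
locale semigroup = semigroup_on UNIV D A T for D :: "'a::banach set" and A T
begin

text \<open>On the whole space each T h is a \<open>bounded_linear\<close> map, so it commutes with integrals.\<close>
lemma T_bounded_linear: "0 \<le> h \<Longrightarrow> bounded_linear (T h)"
proof -
  assume h: "0 \<le> h"
  obtain L where L: "L \<ge> 0" "bounded_op_on UNIV UNIV L (T h)" using T_bounded_op[OF h] by blast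
  show ?thesis
    by (rule bounded_linear_intro[where K = L])
      (use L in \<open>auto simp: bounded_op_add bounded_op_scale mult.commute dest: bounded_op_norm\<close>)
qed

definition orbit_integral :: "'a \<Rightarrow> real \<Rightarrow> 'a" where
  "orbit_integral y r = integral {0..r} (\<lambda>s. T s y)"

lemma orbit_continuous_on: "0 \<le> a \<Longrightarrow> continuous_on {a..b} (\<lambda>s. T s y)"
  using continuous_on_subset[OF T_orbit_continuous[of y]] by auto

lemma orbit_integral_has_integral:
  assumes ab: "0 \<le> a" "a \<le> b"
  shows "((\<lambda>s. T s y) has_integral (orbit_integral y b - orbit_integral y a)) {a..b}"
proof -
  have "(\<lambda>s. T s y) integrable_on {0..b}"
    using orbit_continuous_on[of 0 b y] by (simp add: integrable_continuous_real)
  then have "integral {0..a} (\<lambda>s. T s y) + integral {a..b} (\<lambda>s. T s y) = integral {0..b} (\<lambda>s. T s y)"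
    using ab by (intro Henstock_Kurzweil_Integration.integral_combine) auto
  moreover have "((\<lambda>s. T s y) has_integral integral {a..b} (\<lambda>s. T s y)) {a..b}"
    using orbit_continuous_on[of a b y] ab by (simp add: integrable_continuous_real integrable_integral)
  ultimately show ?thesis by (metis (no_types) orbit_integral_def add_diff_cancel_left')
qed

lemma orbit_integral_zero: "orbit_integral y 0 = 0"
  by (simp add: orbit_integral_def)

lemma orbit_integral_scale: "orbit_integral (c *\<^sub>R y) r = c *\<^sub>R orbit_integral y r"
proof -
  have "integral {0..r} (\<lambda>s. T s (c *\<^sub>R y)) = integral {0..r} (\<lambda>s. c *\<^sub>R T s y)"
    by (rule integral_cong) (simp add: T_scale)
  then show ?thesis by (simp add: orbit_integral_def)
qed

lemma T_orbit_integral: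
  assumes h: "0 \<le> h" and r: "0 \<le> r"
  shows "T h (orbit_integral y r) = orbit_integral y (r + h) - orbit_integral y h"
proof -
  have "T h (orbit_integral y r) = integral {0..r} (T h \<circ> (\<lambda>s. T s y))"
    unfolding orbit_integral_def using orbit_continuous_on[of 0 r y] T_bounded_linear[OF h]
    by (simp add: integral_linear integrable_continuous_real)
  also have "\<dots> = integral {0..r} ((\<lambda>s. T s y) \<circ> (+) h)"
    by (rule integral_cong) (use h T_semigroup in \<open>auto\<close>)
  also have "\<dots> = integral {h..r + h} (\<lambda>s. T s y)"
    using integral_shift_Icc_real[of 0 r "\<lambda>s. T s y" h] by (simp add: add.commute)
  also have "\<dots> = orbit_integral y (r + h) - orbit_integral y h"
    using orbit_integral_has_integral[of h "r + h" y] h r by (simp add: integral_unique)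
  finally show ?thesis .
qed

lemma orbit_integral_quotient:
  assumes r: "0 \<le> r"
  shows "((\<lambda>h. (1 / h) *\<^sub>R (orbit_integral y (r + h) - orbit_integral y r)) \<longlongrightarrow> T r y) (at_right 0)"
proof -
  have "((\<lambda>u. integral {0..u} (\<lambda>s. T s y)) has_vector_derivative T r y) (at r within {0..r+1})"
    using orbit_continuous_on[of 0 "r+1" y] r by (intro integral_has_vector_derivative) auto
  then have "(orbit_integral y has_vector_derivative T r y) (at r within {r..r+1})"
    unfolding orbit_integral_def[abs_def] by (rule has_vector_derivative_within_subset) (use r in auto)
  then have "((\<lambda>u. (1 / (u - r)) *\<^sub>R (orbit_integral y u - orbit_integral y r)) \<longlongrightarrow> T r y) (at_right r)"
    using at_within_Icc_at_right[of r "r+1"] by (simp add: has_vector_derivative_iff_quotient)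
  then show ?thesis unfolding filterlim_at_right_to_0[of _ _ r] by (simp add: add.commute)
qed

lemma orbit_integral_in_domain:
  assumes r: "0 \<le> r"
  shows "orbit_integral y r \<in> D \<and> A (orbit_integral y r) = T r y - y"
proof -
  let ?G = "orbit_integral y"
  have "((\<lambda>h. (1 / h) *\<^sub>R (?G (r + h) - ?G r) - (1 / h) *\<^sub>R (?G (0 + h) - ?G 0)) \<longlongrightarrow> T r y - T 0 y)
      (at_right 0)"
    by (intro tendsto_diff orbit_integral_quotient r) simp
  moreover have "eventually (\<lambda>h. (1 / h) *\<^sub>R (?G (r + h) - ?G r) - (1 / h) *\<^sub>R (?G (0 + h) - ?G 0)
     = (1 / h) *\<^sub>R (T h (?G r) - ?G r)) (at_right (0::real))"
    unfolding eventually_at_right_field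
    by (intro exI[of _ 1]) (auto simp: T_orbit_integral r orbit_integral_zero algebra_simps)
  ultimately have lim: "((\<lambda>h. (1 / h) *\<^sub>R (T h (?G r) - ?G r)) \<longlongrightarrow> T r y - y) (at_right 0)"
    using T_zero by (simp add: Lim_transform_eventually)
  have inD: "?G r \<in> D" using domain_eq lim by blast
  show ?thesis using inD tendsto_unique[OF _ generator_limit[OF inD] lim] by simp
qed

text \<open>Orbit integrals are dense, since \<open>(1/r) \<integral>\<^sub>0\<^sup>r T s y ds \<rightarrow> y\<close> as \<open>r \<rightarrow> 0\<close>.\<close>
lemma orbit_integrals_dense: "closure {orbit_integral y r | y r. 0 \<le> r} = UNIV"
proof -
  have "z \<in> closure {orbit_integral y r | y r. 0 \<le> r}" for z
  proof -
    have "((\<lambda>r. (1 / r) *\<^sub>R orbit_integral z r) \<longlongrightarrow> z) (at_right 0)"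
      using orbit_integral_quotient[of 0 z] T_zero by (simp add: orbit_integral_zero)
    moreover have "eventually (\<lambda>r. (1 / r) *\<^sub>R orbit_integral z r \<in> {orbit_integral y r | y r. 0 \<le> r})
        (at_right (0::real))"
      unfolding eventually_at_right_field
      by (intro exI[of _ 1]) (use less_imp_le in \<open>auto simp: orbit_integral_scale[symmetric]\<close>)
    ultimately show ?thesis
      by (intro closure_approachable[THEN iffD2] allI impI)
        (metis (mono_tags, lifting) eventually_happens' tendstoD eventually_conj_iff trivial_limit_at_right_real)
  qed
  then show ?thesis by auto
qed

lemma orbit_integral_uniform_expansion:
  assumes r0: "0 \<le> r0" and t: "0 \<le> t" and e: "e > 0"
  shows "\<exists>d>0. \<forall>h a. 0 < h \<and> h < d \<and> 0 \<le> a \<and> a \<le> t \<longrightarrow>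
     norm (T h (T a (orbit_integral y r0)) - T a (orbit_integral y r0)
           - h *\<^sub>R T a (A (orbit_integral y r0))) \<le> e * h"
proof -
  let ?G = "orbit_integral y"
  have "uniformly_continuous_on {0..t+r0+1} (\<lambda>s. T s y)"
    using orbit_continuous_on[of 0 "t+r0+1" y] by (simp add: compact_uniformly_continuous)
  then obtain d0 where d0: "d0 > 0" "\<And>s s'. s \<in> {0..t+r0+1} \<Longrightarrow> s' \<in> {0..t+r0+1} \<Longrightarrow> dist s' s < d0
     \<Longrightarrow> dist (T s' y) (T s y) < e/2"
    unfolding uniformly_continuous_on_def using e by (meson half_gt_zero)
  show ?thesis
  proof (intro exI[of _ "min d0 1"] conjI allI impI)
    show "0 < min d0 1" using d0 by simp
    fix h a assume ha: "0 < h \<and> h < min d0 1 \<and> 0 \<le> a \<and> a \<le> t"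
    have step: "norm (?G (b + h) - ?G b - h *\<^sub>R T b y) \<le> h * (e/2)" if b: "0 \<le> b" "b \<le> t + r0" for b
    proof -
      have "norm (T s y - T b y) \<le> e/2" if "s \<in> {b..b+h}" for s
        using that ha b d0(2)[of b s] by (simp add: dist_norm dist_real_def)
      then show ?thesis
        using has_integral_deviation_bound[OF orbit_integral_has_integral[of b "b + h" y], of "T b y" "e/2"]
          b ha by simp
    qed
    have GD: "A (?G r0) = T r0 y - y" using orbit_integral_in_domain[OF r0] by auto
    have eq1: "T a (?G r0) = ?G (r0 + a) - ?G a" using T_orbit_integral ha r0 by simp
    have "T h (T a (?G r0)) = T (h + a) (?G r0)" using T_semigroup[of h a "?G r0"] ha by simp
    also have "\<dots> = ?G (r0 + (h + a)) - ?G (h + a)" using T_orbit_integral[of "h + a" r0 y] ha r0 by simp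
    finally have eq2: "T h (T a (?G r0)) = ?G (r0 + a + h) - ?G (a + h)" by (simp add: ac_simps)
    have eq3: "T a (A (?G r0)) = T (r0 + a) y - T a y"
      using GD T_diff[of a "T r0 y" y] T_semigroup[of a r0 y] ha r0 by (simp add: add.commute)
    have "T h (T a (?G r0)) - T a (?G r0) - h *\<^sub>R T a (A (?G r0)) =
       (?G ((r0 + a) + h) - ?G (r0 + a) - h *\<^sub>R T (r0 + a) y) - (?G (a + h) - ?G a - h *\<^sub>R T a y)"
      by (simp only: eq2, simp add: eq1 eq3 algebra_simps)
    also have "norm \<dots> \<le> h * (e/2) + h * (e/2)"
      by (rule order_trans[OF norm_triangle_ineq4 add_mono]; rule step; use ha r0 t in auto)
    finally show "norm (T h (T a (?G r0)) - T a (?G r0) - h *\<^sub>R T a (A (?G r0))) \<le> e * h"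
      by (simp add: algebra_simps)
  qed
qed

end

abbreviation small_steps :: "(real \<times> nat) filter" where
  "small_steps \<equiv> at_right (0::real) \<times>\<^sub>F sequentially"

lemma eventually_small_steps:
  "eventually (\<lambda>p. Q (fst p) (snd p)) small_steps \<longleftrightarrow>
   (\<exists>d>0. \<exists>N. \<forall>h m. 0 < h \<longrightarrow> h < d \<longrightarrow> N \<le> m \<longrightarrow> Q h m)"
proof
  assume "eventually (\<lambda>p. Q (fst p) (snd p)) small_steps"
  then obtain Pf Pg where "eventually Pf (at_right 0)" "eventually Pg sequentially"
     "\<forall>x y. Pf x \<longrightarrow> Pg y \<longrightarrow> Q x y" unfolding eventually_prod_filter by force
  then obtain b N where "b > 0" "\<And>y. 0 < y \<Longrightarrow> y < b \<Longrightarrow> Pf y" "\<And>m. N \<le> m \<Longrightarrow> Pg m"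
    unfolding eventually_at_right_field eventually_sequentially by auto
  with \<open>\<forall>x y. Pf x \<longrightarrow> Pg y \<longrightarrow> Q x y\<close>
  show "\<exists>d>0. \<exists>N. \<forall>h m. 0 < h \<longrightarrow> h < d \<longrightarrow> N \<le> m \<longrightarrow> Q h m" by blast
next
  assume "\<exists>d>0. \<exists>N. \<forall>h m. 0 < h \<longrightarrow> h < d \<longrightarrow> N \<le> m \<longrightarrow> Q h m"
  then obtain d N where "d > 0" "\<forall>h m. 0 < h \<longrightarrow> h < d \<longrightarrow> N \<le> m \<longrightarrow> Q h m" by blast
  then show "eventually (\<lambda>p. Q (fst p) (snd p)) small_steps"
    unfolding eventually_prod_filter
    by (intro exI[of _ "\<lambda>h. 0 < h \<and> h < d"] exI[of _ "\<lambda>m. N \<le> m"])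
      (auto simp: eventually_at_right_field eventually_sequentially)
qed

lemma eventually_small_steps_snd:
  "eventually Q sequentially \<Longrightarrow> eventually (\<lambda>p. Q (snd p)) small_steps"
  unfolding eventually_sequentially eventually_small_steps[of "\<lambda>_ m. Q m"] by (meson zero_less_one)

lemma eventually_small_steps_fst: "d > 0 \<Longrightarrow> eventually (\<lambda>p. 0 < fst p \<and> fst p < d) small_steps"
  unfolding eventually_small_steps[of "\<lambda>h _. 0 < h \<and> h < d"] by auto

lemma eventually_small_steps_half:
  "eventually (\<lambda>p. Q (fst p) (snd p)) small_steps \<Longrightarrow> eventually (\<lambda>p. Q (fst p / 2) (snd p)) small_steps"
proof -
  assume "eventually (\<lambda>p. Q (fst p) (snd p)) small_steps"
  then obtain d N where "d > 0" "\<forall>h m. 0 < h \<longrightarrow> h < d \<longrightarrow> N \<le> m \<longrightarrow> Q h m"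
    unfolding eventually_small_steps by blast
  then show ?thesis
    unfolding eventually_small_steps[of "\<lambda>h. Q (h / 2)"] by (intro exI[of _ d] conjI exI[of _ N]) auto
qed

abbreviation grid :: "(nat \<times> nat) filter" where
  "grid \<equiv> sequentially \<times>\<^sub>F sequentially"

lemma eventually_grid_fst: "eventually (\<lambda>nm. fst nm \<ge> N) grid"
  unfolding eventually_prod_sequentially by auto

lemma eventually_grid_snd: "eventually Q sequentially \<Longrightarrow> eventually (\<lambda>nm. Q (snd nm)) grid"
  unfolding eventually_sequentially eventually_prod_sequentially by auto

lemma eventually_grid_steps:
  assumes t: "t > 0"
  shows "eventually (\<lambda>nm. fst nm \<ge> 1 \<and> 0 < t / real (fst nm) \<and> t / real (fst nm) \<le> 1) grid"
  using eventually_grid_fst[of "nat \<lceil>t\<rceil> + 1"]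
proof eventually_elim
  case (elim nm)
  then have "real (fst nm) \<ge> t" "fst nm \<ge> 1" by linarith+
  then show ?case using t by (simp add: divide_le_eq_1)
qed

lemma eventually_grid_of_small_steps:
  assumes t: "t > 0" and ev: "eventually (\<lambda>p. Q (fst p) (snd p)) small_steps"
  shows "eventually (\<lambda>nm. Q (t / real (fst nm)) (snd nm)) grid"
proof -
  obtain d N where d: "d > 0" and H: "\<forall>h m. 0 < h \<longrightarrow> h < d \<longrightarrow> N \<le> m \<longrightarrow> Q h m"
    using ev unfolding eventually_small_steps by blast
  define N' where "N' = max N (nat \<lceil>t / d\<rceil> + 1)"
  show ?thesis unfolding eventually_prod_sequentially
  proof (intro exI[of _ N'] allI impI)
    fix m n assume m: "N' \<le> m" and n: "N' \<le> n"
    have tn: "real n > t / d" using n unfolding N'_def by linarith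
    moreover have "t / d > 0" using t d by simp
    ultimately have npos: "real n > 0" by linarith
    have "t < d * real n" using tn d by (simp add: field_simps)
    then have "t / real n < d" "t / real n > 0" using t npos by (auto simp: field_simps)
    moreover have "N \<le> m" using m by (simp add: N'_def)
    ultimately show "Q (t / real (fst (n, m))) (snd (n, m))" using H by simp
  qed
qed

lemma dense_extension:
  fixes L :: "'i \<Rightarrow> 'a::real_normed_vector \<Rightarrow> 'c::real_normed_vector"
  assumes W: "closure W = UNIV"
    and conv: "\<And>z e. z \<in> W \<Longrightarrow> e > 0 \<Longrightarrow> eventually (\<lambda>i. norm (L i z) \<le> e) F"
    and lip: "eventually (\<lambda>i. \<forall>z z'. norm (L i z - L i z') \<le> B * norm (z - z')) F"
    and B: "B \<ge> 0" and e: "e > 0"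
  shows "eventually (\<lambda>i. norm (L i z) \<le> e) F"
proof -
  have "e / (2 * (B + 1)) > 0" using e B by simp
  then obtain z' where z': "z' \<in> W" "dist z' z < e / (2 * (B + 1))"
    using W closure_approachable by blast
  have "B * norm (z - z') \<le> (B + 1) * (e / (2 * (B + 1)))"
    using z'(2) B by (intro mult_mono) (auto simp: dist_norm norm_minus_commute)
  also have "\<dots> = e / 2" using B by (simp add: field_simps)
  finally have close: "B * norm (z - z') \<le> e / 2" .
  have "e / 2 > 0" using e by simp
  with conv[OF z'(1)] have "eventually (\<lambda>i. norm (L i z') \<le> e / 2) F" .
  with lip show ?thesis
  proof (eventually_elim)
    case (elim i)
    then have "norm (L i z - L i z') \<le> e / 2" using close by (meson order_trans)
    then show ?case using elim norm_triangle_sub[of "L i z" "L i z'"] by linarith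
  qed
qed

text \<open>Pointwise eventual smallness along a continuous curve over a compact set becomes uniform,
  provided the maps are eventually uniformly Lipschitz (finite net argument).\<close>
lemma eventually_uniform_on_compact:
  fixes g :: "'s::metric_space \<Rightarrow> 'a::real_normed_vector" and L :: "'i \<Rightarrow> 'a \<Rightarrow> 'c::real_normed_vector"
  assumes S: "compact S" and g: "continuous_on S g"
    and pointwise: "\<And>a e. a \<in> S \<Longrightarrow> e > 0 \<Longrightarrow> eventually (\<lambda>i. norm (L i (g a)) \<le> e) F"
    and lip: "eventually (\<lambda>i. \<forall>z z'. norm (L i z - L i z') \<le> B * norm (z - z')) F"
    and B: "B \<ge> 0" and e: "e > 0"
  shows "eventually (\<lambda>i. \<forall>a\<in>S. norm (L i (g a)) \<le> e) F"
proof -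
  define \<eta> where "\<eta> = e / (2 * (B + 1))"
  have eta: "\<eta> > 0" using e B by (simp add: \<eta>_def)
  have B\<eta>: "B * \<eta> \<le> e / 2" unfolding \<eta>_def using B e by (simp add: field_simps)
  obtain \<delta> where \<delta>: "\<delta> > 0" "\<And>a a'. a \<in> S \<Longrightarrow> a' \<in> S \<Longrightarrow> dist a' a < \<delta> \<Longrightarrow> dist (g a') (g a) < \<eta>"
    using compact_uniformly_continuous[OF g S] eta unfolding uniformly_continuous_on_def by metis
  obtain G where G: "G \<subseteq> S" "finite G" "S \<subseteq> (\<Union>c\<in>G. ball c \<delta>)"
  proof -
    have cov: "S \<subseteq> (\<Union>c\<in>S. ball c \<delta>)" using \<delta>(1) by force
    show ?thesis using compactE_image[OF S _ cov] that by auto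
  qed
  have "e / 2 > 0" using e by simp
  then have "\<forall>c\<in>G. eventually (\<lambda>i. norm (L i (g c)) \<le> e / 2) F" using pointwise G(1) by blast
  then have "eventually (\<lambda>i. \<forall>c\<in>G. norm (L i (g c)) \<le> e / 2) F"
    by (rule eventually_ball_finite[OF G(2)])
  with lip show ?thesis
  proof eventually_elim
    case (elim i)
    show ?case
    proof
      fix a assume a: "a \<in> S"
      then obtain c where c: "c \<in> G" "dist c a < \<delta>" using G(3) by auto
      have "norm (g a - g c) < \<eta>" using \<delta>(2)[of c a] a c G(1) by (auto simp: dist_norm dist_commute)
      then have "norm (L i (g a) - L i (g c)) \<le> e / 2"
        using elim(1) B B\<eta> by (meson less_imp_le mult_left_mono order_trans)
      moreover have "norm (L i (g c)) \<le> e / 2" using elim(2) c by blast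
      ultimately show "norm (L i (g a)) \<le> e"
        using norm_triangle_sub[of "L i (g a)" "L i (g c)"] by linarith
    qed
  qed
qed

locale approximating_semigroups =
  fixes V :: "nat \<Rightarrow> 'b::banach set" and P :: "nat \<Rightarrow> 'a::banach \<Rightarrow> 'b" and J :: "nat \<Rightarrow> 'b \<Rightarrow> 'a"
    and MP :: real and DA :: "'a set" and A :: "'a \<Rightarrow> 'a"
    and DAm :: "nat \<Rightarrow> 'b set" and Am :: "nat \<Rightarrow> 'b \<Rightarrow> 'b" and Tm :: "nat \<Rightarrow> real \<Rightarrow> 'b \<Rightarrow> 'b"
    and K w :: real
  assumes V_sub: "\<And>m. closed_subspace (V m)"
    and P_bd: "\<And>m. bounded_op_on UNIV (V m) MP (P m)"
    and PJ: "\<And>m y. y \<in> V m \<Longrightarrow> P m (J m y) = y"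
    and Am_gen: "\<And>m. generates_on (V m) (DAm m) (Am m) (Tm m)"
    and K1: "K \<ge> 1"
    and bound: "\<And>m h y. h > 0 \<Longrightarrow> y \<in> V m \<Longrightarrow> norm (Tm m h y) \<le> K * exp (w * h) * norm y"
    and dense: "densely_defined DA"
    and consistent: "\<And>x. x \<in> DA \<Longrightarrow> (\<forall>\<^sub>F m in sequentially. P m x \<in> DAm m) \<and>
               (\<lambda>m. J m (Am m (P m x))) \<longlonglongrightarrow> A x"
begin

lemma bounded_semigroup_m: "bounded_semigroup_on (V m) (DAm m) (Am m) (Tm m) K w"
  by unfold_locales (use V_sub Am_gen K1 bound in auto)

text \<open>Uniform bounds for the projections P m and for Tm m s on the time interval [0, 1].\<close>
definition "PB = max MP 0"
definition "TB = K * exp \<bar>w\<bar>"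

lemma PB_nonneg: "PB \<ge> 0" by (simp add: PB_def)
lemma TB_ge_1: "TB \<ge> 1" using bounded_semigroup_on.growth_ge_1[OF bounded_semigroup_m, of 1] by (simp add: TB_def)

lemma V_subspace: "subspace (V m)" using V_sub by (simp add: closed_subspace_def)
lemma P_in: "P m x \<in> V m" using P_bd bounded_op_in by blast
lemma P_diff: "P m (x - y) = P m x - P m y" using bounded_op_diff[OF P_bd] by simp
lemma P_add: "P m (x + y) = P m x + P m y" using bounded_op_add[OF P_bd] by simp
lemma P_scale: "P m (c *\<^sub>R x) = c *\<^sub>R P m x" using bounded_op_scale[OF P_bd] by simp
lemma P_norm: "norm (P m x) \<le> PB * norm x"
  using bounded_op_norm[OF bounded_op_nonneg[OF P_bd]] by (simp add: PB_def)

lemma Tm_bound: "0 \<le> s \<Longrightarrow> s \<le> 1 \<Longrightarrow> y \<in> V m \<Longrightarrow> norm (Tm m s y) \<le> TB * norm y"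
  using bounded_semigroup_on.T_bound[OF bounded_semigroup_m, of s 1 y] by (simp add: TB_def)

lemma generator_approx:
  assumes d: "d \<in> DA" and e: "e > 0"
  shows "eventually (\<lambda>m. P m d \<in> DAm m \<and> norm (Am m (P m d) - P m (A d)) \<le> e) sequentially"
proof -
  have e': "e / (PB + 1) > 0" using e PB_nonneg by simp
  show ?thesis using conjunct1[OF consistent[OF d]] tendstoD[OF conjunct2[OF consistent[OF d]] e']
  proof eventually_elim
    case (elim m)
    interpret bounded_semigroup_on "V m" "DAm m" "Am m" "Tm m" K w by (rule bounded_semigroup_m)
    have "Am m (P m d) - P m (A d) = P m (J m (Am m (P m d)) - A d)"
      using PJ[OF A_in] elim(1) by (simp add: P_diff)
    also have "norm \<dots> \<le> PB * norm (J m (Am m (P m d)) - A d)" by (rule P_norm)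
    also have "\<dots> \<le> PB * (e / (PB + 1))"
      using elim(2) PB_nonneg by (intro mult_left_mono) (auto simp: dist_norm)
    also have "\<dots> \<le> e" using PB_nonneg e by (simp add: field_simps)
    finally show ?case using elim(1) by simp
  qed
qed

lemma small_time_continuity_domain:
  assumes v: "v \<in> DA" and e: "e > 0"
  shows "eventually (\<lambda>p. \<forall>s\<in>{0..fst p}. norm (Tm (snd p) s (P (snd p) v) - P (snd p) v) \<le> e) small_steps"
proof -
  define B where "B = PB * norm (A v) + 1"
  have B0: "B \<ge> 0" using PB_nonneg by (simp add: B_def)
  obtain N where N: "\<And>m. m \<ge> N \<Longrightarrow> P m v \<in> DAm m \<and> norm (Am m (P m v) - P m (A v)) \<le> 1"
    using generator_approx[OF v zero_less_one] unfolding eventually_sequentially by blast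
  define d where "d = min 1 (e / (TB * B + 1))"
  have pos: "TB * B + 1 > 0" using B0 TB_ge_1 by (simp add: add_nonneg_pos)
  then have d0: "d > 0" using e unfolding d_def by simp
  show ?thesis unfolding eventually_small_steps[of "\<lambda>h m. \<forall>s\<in>{0..h}. norm (Tm m s (P m v) - P m v) \<le> e"]
  proof (intro exI[of _ d] conjI d0 exI[of _ N] allI impI ballI)
    fix h m s assume h: "0 < h" "h < d" "N \<le> m" and s: "s \<in> {0..h}"
    interpret bounded_semigroup_on "V m" "DAm m" "Am m" "Tm m" K w by (rule bounded_semigroup_m)
    have Pw: "P m v \<in> DAm m" using N h by blast
    have "norm (Am m (P m v)) \<le> norm (P m (A v)) + 1"
      using N[OF h(3)] norm_triangle_sub[of "Am m (P m v)" "P m (A v)"] by linarith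
    also have "\<dots> \<le> B" using P_norm by (simp add: B_def)
    finally have AmB: "norm (Am m (P m v)) \<le> B" .
    show "norm (Tm m s (P m v) - P m v) \<le> e"
    proof (cases "s = 0")
      case True then show ?thesis using T_zero[OF P_in] e by simp
    next
      case False
      then have s0: "0 < s" "s \<le> 1" using s h by (auto simp: d_def)
      have "norm (Tm m s (P m v) - P m v - s *\<^sub>R 0) \<le> s * (TB * B)"
      proof (rule increment_estimate[OF Pw s0(1)])
        fix r assume "r \<in> {0..s}"
        then have "norm (Tm m r (Am m (P m v))) \<le> TB * norm (Am m (P m v))"
          using Tm_bound A_in[OF Pw] s0 by auto
        also have "\<dots> \<le> TB * B" using AmB TB_ge_1 by (simp add: mult_left_mono)
        finally show "norm (Tm m r (Am m (P m v)) - 0) \<le> TB * B" by simp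
      qed
      also have "s * (TB * B) \<le> d * (TB * B + 1)"
        using s h B0 TB_ge_1 by (intro mult_mono) auto
      also have "\<dots> \<le> (e / (TB * B + 1)) * (TB * B + 1)"
        using pos unfolding d_def by (intro mult_right_mono) auto
      also have "\<dots> = e" using pos by simp
      finally show ?thesis by simp
    qed
  qed
qed

lemma small_time_continuity:
  assumes e: "e > 0"
  shows "eventually (\<lambda>p. \<forall>s\<in>{0..fst p}. norm (Tm (snd p) s (P (snd p) v) - P (snd p) v) \<le> e) small_steps"
proof -
  define \<eta> where "\<eta> = e / (2 * ((TB + 1) * PB + 1))"
  have c0: "(TB + 1) * PB \<ge> 0" using TB_ge_1 PB_nonneg by simp
  then have eta: "\<eta> > 0" using e unfolding \<eta>_def by (simp add: add_nonneg_pos)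
  have "v \<in> closure DA" using dense by (simp add: densely_defined_def)
  then obtain v' where v': "v' \<in> DA" "dist v' v < \<eta>" using eta unfolding closure_approachable by blast
  have "(TB + 1) * PB * norm (v - v') \<le> ((TB + 1) * PB + 1) * \<eta>"
    using v'(2) c0 by (intro mult_mono) (auto simp: dist_norm norm_minus_commute)
  also have "\<dots> = e / 2" using c0 unfolding \<eta>_def by (simp add: field_simps)
  finally have small: "(TB + 1) * PB * norm (v - v') \<le> e / 2" .
  have e2: "e / 2 > 0" using e by simp
  show ?thesis using small_time_continuity_domain[OF v'(1) e2] eventually_small_steps_fst[OF zero_less_one]
  proof eventually_elim
    case (elim p)
    show ?case
    proof
      fix s assume s: "s \<in> {0..fst p}"
      let ?m = "snd p"
      interpret bounded_semigroup_on "V ?m" "DAm ?m" "Am ?m" "Tm ?m" K w by (rule bounded_semigroup_m)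
      have s1: "0 \<le> s" "s \<le> 1" using s elim by auto
      have split: "Tm ?m s (P ?m v) - P ?m v =
          (Tm ?m s (P ?m v') - P ?m v') + (Tm ?m s (P ?m (v - v')) - P ?m (v - v'))"
        using T_diff[of s "P ?m v" "P ?m v'"] s1 P_in by (simp add: P_diff algebra_simps)
      have "norm (Tm ?m s (P ?m (v - v')) - P ?m (v - v')) \<le> (TB + 1) * norm (P ?m (v - v'))"
        using Tm_bound[OF s1 P_in, of ?m "v - v'"]
          norm_triangle_ineq4[of "Tm ?m s (P ?m (v - v'))" "P ?m (v - v')"]
        by (simp add: algebra_simps)
      also have "\<dots> \<le> (TB + 1) * (PB * norm (v - v'))" using TB_ge_1 P_norm by (intro mult_left_mono) auto
      finally have n2: "norm (Tm ?m s (P ?m (v - v')) - P ?m (v - v')) \<le> e / 2"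
        using small by (simp add: mult.assoc)
      have n1: "norm (Tm ?m s (P ?m v') - P ?m v') \<le> e / 2" using elim s by blast
      show "norm (Tm ?m s (P ?m v) - P ?m v) \<le> e"
        unfolding split using norm_triangle_mono[OF n1 n2] by linarith
    qed
  qed
qed

lemma generator_consistency:
  assumes d: "d \<in> DA" and e: "e > 0"
  shows "eventually (\<lambda>p. P (snd p) d \<in> DAm (snd p) \<and>
     norm ((1 / fst p) *\<^sub>R (Tm (snd p) (fst p) (P (snd p) d) - P (snd p) d) - P (snd p) (A d)) \<le> e)
     small_steps"
proof -
  define e1 where "e1 = e / (TB + 1)"
  have e1: "e1 > 0" using e TB_ge_1 by (simp add: e1_def)
  show ?thesis
    using eventually_small_steps_snd[OF generator_approx[OF d e1]] small_time_continuity[OF e1, of "A d"]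
      eventually_small_steps_fst[OF zero_less_one]
  proof eventually_elim
    case (elim p)
    let ?m = "snd p" and ?h = "fst p"
    interpret bounded_semigroup_on "V ?m" "DAm ?m" "Am ?m" "Tm ?m" K w by (rule bounded_semigroup_m)
    have Pd: "P ?m d \<in> DAm ?m" and h: "0 < ?h" "?h < 1" using elim by auto
    have AmV: "Am ?m (P ?m d) - P ?m (A d) \<in> V ?m" using A_in[OF Pd] P_in sub by (simp add: subspace_diff)
    have "norm (Tm ?m ?h (P ?m d) - P ?m d - ?h *\<^sub>R P ?m (A d)) \<le> ?h * e"
    proof (rule increment_estimate[OF Pd h(1)])
      fix r assume r: "r \<in> {0..?h}"
      have split: "Tm ?m r (Am ?m (P ?m d)) - P ?m (A d) =
          Tm ?m r (Am ?m (P ?m d) - P ?m (A d)) + (Tm ?m r (P ?m (A d)) - P ?m (A d))"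
        using T_diff[of r "Am ?m (P ?m d)" "P ?m (A d)"] r A_in[OF Pd] P_in by auto
      have "norm (Tm ?m r (Am ?m (P ?m d) - P ?m (A d))) \<le> TB * norm (Am ?m (P ?m d) - P ?m (A d))"
        by (rule Tm_bound[OF _ _ AmV]) (use r h in auto)
      also have "\<dots> \<le> TB * e1" using elim TB_ge_1 by (intro mult_left_mono) auto
      finally have n1: "norm (Tm ?m r (Am ?m (P ?m d) - P ?m (A d))) \<le> TB * e1" .
      have n2: "norm (Tm ?m r (P ?m (A d)) - P ?m (A d)) \<le> e1" using elim r by blast
      have "TB * e1 + e1 = e"
      proof -
        have "TB + 1 \<noteq> 0" using TB_ge_1 by simp
        then show ?thesis unfolding e1_def by (simp add: divide_simps) (simp add: algebra_simps)
      qed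
      then show "norm (Tm ?m r (Am ?m (P ?m d)) - P ?m (A d)) \<le> e"
        unfolding split using norm_triangle_mono[OF n1 n2] by linarith
    qed
    moreover have "(1 / ?h) *\<^sub>R (Tm ?m ?h (P ?m d) - P ?m d) - P ?m (A d) =
        (1 / ?h) *\<^sub>R (Tm ?m ?h (P ?m d) - P ?m d - ?h *\<^sub>R P ?m (A d))"
      using h by (simp add: scaleR_diff_right)
    ultimately show ?case using Pd h by (simp add: pos_divide_le_eq mult.commute)
  qed
qed

end

text \<open>An elementary inequality used to choose the resolvent parameter.\<close>
lemma exp_le_one_plus_mul_exp: "0 \<le> (x::real) \<Longrightarrow> exp x \<le> 1 + x * exp x"
proof -
  assume x: "0 \<le> x"
  have "exp x * (1 - x) \<le> 1"
  proof -
    have "1 - x \<le> exp (- x)" using exp_ge_add_one_self[of "-x"] by simp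
    then have "exp x * (1 - x) \<le> exp x * exp (- x)" by (simp add: mult_left_mono)
    then show ?thesis by (simp add: exp_minus)
  qed
  then show ?thesis by (simp add: algebra_simps)
qed

text \<open>A linear map F on a closed subspace with power bounds \<open>\<parallel>F^k\<parallel> \<le> K e^(\<omega> \<tau> k)\<close>, thought of as
  one step of size \<tau> of a time discretisation. Following Chernoff, the series
  \<open>Rs = \<tau> q \<Sum> q^k F^k\<close> with \<open>q = 1/(1 + lam \<tau>)\<close> is the resolvent at lam of the
  "discrete generator" \<open>(F - I)/\<tau>\<close>; it is bounded by K independently of \<tau>.\<close>
locale power_bounded =
  fixes V :: "'b::banach set" and F :: "'b \<Rightarrow> 'b" and \<tau> K \<omega> :: real
  assumes V: "closed_subspace V"
    and F_in: "\<And>y. y \<in> V \<Longrightarrow> F y \<in> V"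
    and F_add: "\<And>y z. y \<in> V \<Longrightarrow> z \<in> V \<Longrightarrow> F (y + z) = F y + F z"
    and F_scale: "\<And>y c. y \<in> V \<Longrightarrow> F (c *\<^sub>R y) = c *\<^sub>R F y"
    and pow: "\<And>k y. y \<in> V \<Longrightarrow> norm ((F ^^ k) y) \<le> K * exp (\<omega> * \<tau>) ^ k * norm y"
    and tau: "0 < \<tau>" "\<tau> \<le> 1" and om: "0 \<le> \<omega>" and K0: "0 \<le> K"
begin

lemma sub: "subspace V" and clo: "closed V" using V by (auto simp: closed_subspace_def)

lemma F_pow_in: "y \<in> V \<Longrightarrow> (F ^^ k) y \<in> V"
  by (induction k) (auto simp: F_in)
lemma F_pow_add: "y \<in> V \<Longrightarrow> z \<in> V \<Longrightarrow> (F ^^ k) (y + z) = (F ^^ k) y + (F ^^ k) z"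
  by (induction k) (auto simp: F_add F_pow_in)
lemma F_pow_scale: "y \<in> V \<Longrightarrow> (F ^^ k) (c *\<^sub>R y) = c *\<^sub>R (F ^^ k) y"
  by (induction k) (auto simp: F_scale F_pow_in)
lemma F_pow_bounded_op: "bounded_op_on V V (K * exp (\<omega> * \<tau>) ^ k) (F ^^ k)"
  unfolding bounded_op_on_def using F_pow_in F_pow_add F_pow_scale pow by blast
lemma F_pow_diff: "y \<in> V \<Longrightarrow> z \<in> V \<Longrightarrow> (F ^^ k) (y - z) = (F ^^ k) y - (F ^^ k) z"
  using bounded_op_diff[OF F_pow_bounded_op sub] .
lemma F_bounded_op: "bounded_op_on V V (K * exp (\<omega> * \<tau>)) F"
  using F_pow_bounded_op[of 1] by simp

text \<open>The resolvent parameter lam depends only on \<omega>, not on the step size \<tau> \<le> 1.\<close>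
definition "lam = \<omega> * exp \<omega> + 1"
definition "q = 1 / (1 + lam * \<tau>)"
definition "\<rho> = q * exp (\<omega> * \<tau>)"
definition "Rs y = (\<tau> * q) *\<^sub>R (\<Sum>k. q ^ k *\<^sub>R (F ^^ k) y)"

lemma lam_pos: "lam \<ge> 1" using om by (simp add: lam_def)
lemma q_pos: "0 < q" "q < 1"
proof -
  have "lam * \<tau> > 0" using lam_pos tau by simp
  then have "1 + lam * \<tau> > 1" by linarith
  then show "0 < q" "q < 1" unfolding q_def by auto
qed

text \<open>The choice of lam makes \<open>\<rho> = q e^(\<omega> \<tau>)\<close> a contraction factor with \<open>\<tau> q / (1 - \<rho>) \<le> 1\<close>.\<close>
lemma exp_step_bound: "exp (\<omega> * \<tau>) + \<tau> \<le> 1 + lam * \<tau>"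
proof -
  have "exp (\<omega> * \<tau>) \<le> 1 + (\<omega> * \<tau>) * exp (\<omega> * \<tau>)" using exp_le_one_plus_mul_exp[of "\<omega> * \<tau>"] om tau by simp
  also have "(\<omega> * \<tau>) * exp (\<omega> * \<tau>) \<le> (\<omega> * \<tau>) * exp \<omega>"
  proof -
    have "\<omega> * \<tau> \<le> \<omega>" using om tau by (simp add: mult_left_le)
    then show ?thesis using om tau by (intro mult_left_mono) auto
  qed
  finally show ?thesis unfolding lam_def by (simp add: algebra_simps)
qed

lemma rho_bounds: "0 \<le> \<rho>" "\<rho> < 1" "\<tau> * q / (1 - \<rho>) \<le> 1"
proof -
  show "0 \<le> \<rho>" using q_pos by (simp add: \<rho>_def)
  have "lam * \<tau> > 0" using lam_pos tau by simp
  then have d: "1 + lam * \<tau> > 0" by linarith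
  have "1 - \<rho> = (1 + lam * \<tau> - exp (\<omega> * \<tau>)) / (1 + lam * \<tau>)"
    using d by (simp add: \<rho>_def q_def field_simps)
  moreover have "1 + lam * \<tau> - exp (\<omega> * \<tau>) \<ge> \<tau>" using exp_step_bound by simp
  ultimately have r: "1 - \<rho> \<ge> \<tau> / (1 + lam * \<tau>)" using d by (simp add: divide_right_mono)
  have tp: "\<tau> / (1 + lam * \<tau>) > 0" using tau d by simp
  then show "\<rho> < 1" using r by linarith
  have "\<tau> * q = \<tau> / (1 + lam * \<tau>)" by (simp add: q_def)
  then have a: "\<tau> * q \<le> 1 - \<rho>" using r by simp
  have "1 - \<rho> > 0" using r tp by linarith
  then show "\<tau> * q / (1 - \<rho>) \<le> 1" using a by (simp add: pos_divide_le_eq)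
qed

lemma series_term_bound: "y \<in> V \<Longrightarrow> norm (q ^ k *\<^sub>R (F ^^ k) y) \<le> K * norm y * \<rho> ^ k"
proof -
  assume y: "y \<in> V"
  have "norm (q ^ k *\<^sub>R (F ^^ k) y) = q ^ k * norm ((F ^^ k) y)" using q_pos by simp
  also have "\<dots> \<le> q ^ k * (K * exp (\<omega> * \<tau>) ^ k * norm y)"
    using pow[OF y] q_pos by (intro mult_left_mono) auto
  also have "\<dots> = K * norm y * \<rho> ^ k" by (simp add: \<rho>_def power_mult_distrib)
  finally show ?thesis .
qed

lemma series_summable: "y \<in> V \<Longrightarrow> summable (\<lambda>k. q ^ k *\<^sub>R (F ^^ k) y)"
  using rho_bounds by (intro summable_comparison_test'[OF summable_mult[OF summable_geometric[of \<rho>]] series_term_bound]) auto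

lemma series_in: "y \<in> V \<Longrightarrow> (\<Sum>k. q ^ k *\<^sub>R (F ^^ k) y) \<in> V"
proof -
  assume y: "y \<in> V"
  have "\<And>n. (\<Sum>k<n. q ^ k *\<^sub>R (F ^^ k) y) \<in> V" using F_pow_in y sub by (intro subspace_sum subspace_scale) auto
  then show ?thesis using Lim_in_closed_set[OF clo _ _ summable_LIMSEQ[OF series_summable[OF y]]] by simp
qed

lemma Rs_in: "y \<in> V \<Longrightarrow> Rs y \<in> V"
  unfolding Rs_def using series_in sub by (simp add: subspace_scale)

lemma Rs_bound: "y \<in> V \<Longrightarrow> norm (Rs y) \<le> K * norm y"
proof -
  assume y: "y \<in> V"
  have s2: "summable (\<lambda>k. K * norm y * \<rho> ^ k)" using rho_bounds by (intro summable_mult summable_geometric) auto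
  have s1: "summable (\<lambda>k. norm (q ^ k *\<^sub>R (F ^^ k) y))"
    by (rule summable_comparison_test'[OF s2]) (use series_term_bound[OF y] in auto)
  have "norm (\<Sum>k. q ^ k *\<^sub>R (F ^^ k) y) \<le> (\<Sum>k. norm (q ^ k *\<^sub>R (F ^^ k) y))" by (rule summable_norm[OF s1])
  also have "\<dots> \<le> (\<Sum>k. K * norm y * \<rho> ^ k)" by (rule suminf_le[OF series_term_bound[OF y] s1 s2])
  also have "\<dots> = K * norm y / (1 - \<rho>)"
  proof -
    have n: "norm \<rho> < 1" using rho_bounds by simp
    show ?thesis unfolding suminf_mult[OF summable_geometric[OF n]] suminf_geometric[OF n] by simp
  qed
  finally have nS: "norm (\<Sum>k. q ^ k *\<^sub>R (F ^^ k) y) \<le> K * norm y / (1 - \<rho>)" .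
  have "norm (Rs y) = (\<tau> * q) * norm (\<Sum>k. q ^ k *\<^sub>R (F ^^ k) y)" using q_pos tau by (simp add: Rs_def)
  also have "\<dots> \<le> (\<tau> * q) * (K * norm y / (1 - \<rho>))"
    by (rule mult_left_mono[OF nS]) (use q_pos tau in simp)
  also have "\<dots> = (\<tau> * q / (1 - \<rho>)) * (K * norm y)" by simp
  also have "\<dots> \<le> 1 * (K * norm y)" using rho_bounds K0 by (intro mult_right_mono) auto
  finally show ?thesis by simp
qed

lemma Rs_add: "y \<in> V \<Longrightarrow> z \<in> V \<Longrightarrow> Rs (y + z) = Rs y + Rs z"
  unfolding Rs_def using suminf_add[OF series_summable series_summable, of y z]
  by (simp add: F_pow_add scaleR_add_right[symmetric])
lemma Rs_scale: "y \<in> V \<Longrightarrow> Rs (c *\<^sub>R y) = c *\<^sub>R Rs y"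
proof -
  assume y: "y \<in> V"
  have 1: "(\<Sum>k. q ^ k *\<^sub>R (F ^^ k) (c *\<^sub>R y)) = (\<Sum>k. c *\<^sub>R (q ^ k *\<^sub>R (F ^^ k) y))"
    by (rule arg_cong[where f=suminf], rule ext) (simp add: F_pow_scale[OF y])
  have 2: "(\<Sum>k. c *\<^sub>R (q ^ k *\<^sub>R (F ^^ k) y)) = c *\<^sub>R (\<Sum>k. q ^ k *\<^sub>R (F ^^ k) y)"
    by (rule suminf_scaleR_right[OF series_summable[OF y], symmetric])
  show ?thesis unfolding Rs_def 1 2 by simp
qed
lemma Rs_bounded_op: "bounded_op_on V V K Rs"
  unfolding bounded_op_on_def using Rs_in Rs_add Rs_scale Rs_bound by blast
lemma Rs_diff: "y \<in> V \<Longrightarrow> z \<in> V \<Longrightarrow> Rs (y - z) = Rs y - Rs z"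
  using bounded_op_diff[OF Rs_bounded_op sub] .

lemma F_sums: "y \<in> V \<Longrightarrow> (\<lambda>k. q ^ k *\<^sub>R (F ^^ Suc k) y) sums F (\<Sum>k. q ^ k *\<^sub>R (F ^^ k) y)"
proof -
  assume y: "y \<in> V"
  have "(\<lambda>k. F (q ^ k *\<^sub>R (F ^^ k) y)) sums F (\<Sum>k. q ^ k *\<^sub>R (F ^^ k) y)"
    by (rule bounded_op_sums[OF F_bounded_op V _ series_summable[OF y]]) (use F_pow_in y sub in \<open>auto intro: subspace_scale\<close>)
  then show ?thesis using F_scale F_pow_in y by simp
qed

lemma F_series: "y \<in> V \<Longrightarrow> F (\<Sum>k. q ^ k *\<^sub>R (F ^^ k) y) = (\<Sum>k. q ^ k *\<^sub>R (F ^^ Suc k) y)"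
  using F_sums sums_unique by blast

lemma Rs_commute: "y \<in> V \<Longrightarrow> Rs (F y) = F (Rs y)"
proof -
  assume y: "y \<in> V"
  have "F (Rs y) = (\<tau> * q) *\<^sub>R F (\<Sum>k. q ^ k *\<^sub>R (F ^^ k) y)"
    unfolding Rs_def using F_scale series_in y by simp
  also have "\<dots> = Rs (F y)" unfolding Rs_def F_series[OF y]
    by (simp add: funpow_swap1)
  finally show ?thesis by simp
qed

lemma Rs_equation: "y \<in> V \<Longrightarrow> F (Rs y) - Rs y = \<tau> *\<^sub>R (lam *\<^sub>R Rs y - y)"
proof -
  assume y: "y \<in> V"
  let ?S = "\<Sum>k. q ^ k *\<^sub>R (F ^^ k) y"
  have a: "(\<lambda>k. q ^ Suc k *\<^sub>R (F ^^ Suc k) y) sums (q *\<^sub>R F ?S)"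
    using sums_scaleR_right[OF F_sums[OF y], of q] by (simp add: scaleR_scaleR)
  have "(\<lambda>k. q ^ k *\<^sub>R (F ^^ k) y) sums ((?S - y) + q ^ 0 *\<^sub>R (F ^^ 0) y)"
    using summable_sums[OF series_summable[OF y]] by simp
  then have b: "(\<lambda>k. q ^ Suc k *\<^sub>R (F ^^ Suc k) y) sums (?S - y)"
    by (subst sums_Suc_iff)
  have qF: "q *\<^sub>R F ?S = ?S - y" using sums_unique2[OF a b] .
  have "F ?S = (1 / q) *\<^sub>R (q *\<^sub>R F ?S)" using q_pos by simp
  then have FS: "F ?S = (1 / q) *\<^sub>R (?S - y)" unfolding qF .
  have "lam * \<tau> > 0" using lam_pos tau by simp
  then have d: "1 + lam * \<tau> > 0" by linarith
  have "F (Rs y) - Rs y = (\<tau> * q) *\<^sub>R F ?S - (\<tau> * q) *\<^sub>R ?S"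
    unfolding Rs_def using F_scale series_in y by simp
  also have "\<dots> = \<tau> *\<^sub>R (?S - y) - (\<tau> * q) *\<^sub>R ?S" unfolding FS using q_pos by simp
  also have "\<dots> = \<tau> *\<^sub>R ((1 - q) *\<^sub>R ?S - y)" by (simp add: algebra_simps)
  also have "1 - q = lam * (\<tau> * q)" using d by (simp add: q_def field_simps)
  also have "\<tau> *\<^sub>R ((lam * (\<tau> * q)) *\<^sub>R ?S - y) = \<tau> *\<^sub>R (lam *\<^sub>R Rs y - y)"
    unfolding Rs_def by simp
  finally show ?thesis .
qed

text \<open>The resolvent identity \<open>Rs (lam y - z) - y = Rs ((F y - y)/\<tau> - z)\<close>, i.e.
  Rs inverts \<open>lam - (F - I)/\<tau>\<close>.\<close>
lemma Rs_identity: "y \<in> V \<Longrightarrow> z \<in> V \<Longrightarrow> Rs (lam *\<^sub>R y - z) - y = Rs ((1 / \<tau>) *\<^sub>R (F y - y) - z)"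
proof -
  assume y: "y \<in> V" and z: "z \<in> V"
  have FyV: "F y \<in> V" using F_in y .
  have e: "Rs (F y) - Rs y = \<tau> *\<^sub>R (lam *\<^sub>R Rs y - y)" using Rs_equation[OF y] Rs_commute[OF y] by simp
  have v1: "lam *\<^sub>R y \<in> V" "(1 / \<tau>) *\<^sub>R (F y - y) \<in> V" "F y - y \<in> V"
    using y FyV sub by (auto intro: subspace_scale subspace_diff)
  have "Rs ((1 / \<tau>) *\<^sub>R (F y - y) - z) = (1 / \<tau>) *\<^sub>R (Rs (F y) - Rs y) - Rs z"
    using Rs_diff[OF v1(2) z] Rs_scale[OF v1(3)] Rs_diff[OF FyV y] by simp
  also have "\<dots> = lam *\<^sub>R Rs y - y - Rs z" unfolding e using tau by simp
  also have "\<dots> = Rs (lam *\<^sub>R y - z) - y" using Rs_diff[OF v1(1) z] Rs_scale[OF y] by simp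
  finally show ?thesis by simp
qed

lemma Rs_commute_pow: "y \<in> V \<Longrightarrow> Rs ((F ^^ j) y) = (F ^^ j) (Rs y)"
  by (induction j) (auto simp: Rs_commute F_pow_in Rs_in)

end

locale strang_splitting =
  fixes A B C :: "'a::banach \<Rightarrow> 'a" and DA DB DC :: "'a set"
    and U :: "real \<Rightarrow> 'a \<Rightarrow> 'a"
    and V :: "nat \<Rightarrow> 'b::banach set"
    and P :: "nat \<Rightarrow> 'a \<Rightarrow> 'b" and J :: "nat \<Rightarrow> 'b \<Rightarrow> 'a"
    and Am Bm :: "nat \<Rightarrow> 'b \<Rightarrow> 'b" and DAm DBm :: "nat \<Rightarrow> 'b set"
    and Tm Sm :: "nat \<Rightarrow> real \<Rightarrow> 'b \<Rightarrow> 'b"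
    and MP MT \<omega>T MS \<omega>S M \<omega> :: real
  assumes A_dense: "densely_defined DA" and B_dense: "densely_defined DB"
    and C_closure: "is_operator_closure (DA \<inter> DB) (\<lambda>x. A x + B x) DC C"
    and C_gen: "generates_on UNIV DC C U"
    and V_sub: "\<And>m. closed_subspace (V m)"
    and P_bd: "\<And>m. bounded_op_on UNIV (V m) MP (P m)"
    and PJ: "\<And>m y. y \<in> V m \<Longrightarrow> P m (J m y) = y"
    and Am_gen: "\<And>m. generates_on (V m) (DAm m) (Am m) (Tm m)"
    and Bm_gen: "\<And>m. generates_on (V m) (DBm m) (Bm m) (Sm m)"
    and MT: "MT \<ge> 1" "\<And>m h y. h > 0 \<Longrightarrow> y \<in> V m \<Longrightarrow> norm (Tm m h y) \<le> MT * exp (\<omega>T * h) * norm y"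
    and MS: "MS \<ge> 1" "\<And>m h y. h > 0 \<Longrightarrow> y \<in> V m \<Longrightarrow> norm (Sm m h y) \<le> MS * exp (\<omega>S * h) * norm y"
    and Sseq: "M \<ge> 1"
      "\<And>t k n m y. t \<ge> 0 \<Longrightarrow> n \<ge> 1 \<Longrightarrow> y \<in> V m \<Longrightarrow>
         norm (((\<lambda>z. Sm m (t / real n) (Tm m (t / real n) z)) ^^ k) y)
           \<le> M * exp (real k * \<omega> * t / real n) * norm y"
    and C1: "\<And>x. x \<in> DA \<Longrightarrow> (\<forall>\<^sub>F m in sequentially. P m x \<in> DAm m) \<and>
               (\<lambda>m. J m (Am m (P m x))) \<longlonglongrightarrow> A x"
    and C2: "\<And>x. x \<in> DB \<Longrightarrow> (\<forall>\<^sub>F m in sequentially. P m x \<in> DBm m) \<and>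
               (\<lambda>m. J m (Bm m (P m x))) \<longlonglongrightarrow> B x"
begin

sublocale TA: approximating_semigroups V P J MP DA A DAm Am Tm MT \<omega>T
  by unfold_locales (use V_sub P_bd PJ Am_gen MT A_dense C1 in auto)
sublocale SB: approximating_semigroups V P J MP DB B DBm Bm Sm MS \<omega>S
  by unfold_locales (use V_sub P_bd PJ Bm_gen MS B_dense C2 in auto)
sublocale UU: semigroup DC C U
  by unfold_locales (auto simp: closed_subspace_def C_gen)

abbreviation "KT \<equiv> TA.TB"
abbreviation "KS \<equiv> SB.TB"
abbreviation "PB \<equiv> TA.PB"

lemmas Tm_semigroup_on = bounded_semigroup_on.axioms(1)[OF TA.bounded_semigroup_m]
lemmas Sm_semigroup_on = bounded_semigroup_on.axioms(1)[OF SB.bounded_semigroup_m]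
lemmas Tm_in = semigroup_on.T_in[OF Tm_semigroup_on]
  and Tm_add = semigroup_on.T_add[OF Tm_semigroup_on]
  and Tm_diff = semigroup_on.T_diff[OF Tm_semigroup_on]
  and Tm_scale = semigroup_on.T_scale[OF Tm_semigroup_on]
  and Tm_semigroup = semigroup_on.T_semigroup[OF Tm_semigroup_on]
lemmas Sm_in = semigroup_on.T_in[OF Sm_semigroup_on]
  and Sm_add = semigroup_on.T_add[OF Sm_semigroup_on]
  and Sm_diff = semigroup_on.T_diff[OF Sm_semigroup_on]
  and Sm_scale = semigroup_on.T_scale[OF Sm_semigroup_on]

lemma V_diff: "y \<in> V m \<Longrightarrow> z \<in> V m \<Longrightarrow> y - z \<in> V m"
  and V_add: "y \<in> V m \<Longrightarrow> z \<in> V m \<Longrightarrow> y + z \<in> V m"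
  and V_scale: "y \<in> V m \<Longrightarrow> c *\<^sub>R y \<in> V m"
  using TA.V_subspace by (auto intro: subspace_diff subspace_add subspace_scale)

definition Fm :: "nat \<Rightarrow> real \<Rightarrow> 'b \<Rightarrow> 'b" where
  "Fm m \<tau> y = Tm m (\<tau> / 2) (Sm m \<tau> (Tm m (\<tau> / 2) y))"

lemma strang_step_eq: "(\<lambda>z. Tm m (t / (2 * real n)) (Sm m (t / real n) (Tm m (t / (2 * real n)) z))) = Fm m (t / real n)"
  by (simp add: Fm_def fun_eq_iff mult.commute)

lemma Fm_in: "0 \<le> \<tau> \<Longrightarrow> y \<in> V m \<Longrightarrow> Fm m \<tau> y \<in> V m"
  unfolding Fm_def by (simp add: Tm_in Sm_in)
lemma Fm_add: "0 \<le> \<tau> \<Longrightarrow> y \<in> V m \<Longrightarrow> z \<in> V m \<Longrightarrow> Fm m \<tau> (y + z) = Fm m \<tau> y + Fm m \<tau> z"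
  unfolding Fm_def by (simp add: Tm_in Sm_in Tm_add Sm_add)
lemma Fm_scale: "0 \<le> \<tau> \<Longrightarrow> y \<in> V m \<Longrightarrow> Fm m \<tau> (c *\<^sub>R y) = c *\<^sub>R Fm m \<tau> y"
  unfolding Fm_def by (simp add: Tm_in Sm_in Tm_scale Sm_scale)

lemma Fm_pow_in: "0 \<le> \<tau> \<Longrightarrow> y \<in> V m \<Longrightarrow> (Fm m \<tau> ^^ k) y \<in> V m"
  by (induction k) (auto simp: Fm_in)

lemma Fm_pow_Lie:
  assumes t: "0 < \<tau>" and y: "y \<in> V m"
  shows "(Fm m \<tau> ^^ Suc k) y = Tm m (\<tau>/2) (((\<lambda>z. Sm m \<tau> (Tm m \<tau> z)) ^^ k) (Sm m \<tau> (Tm m (\<tau>/2) y)))"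
proof (induction k)
  case 0 then show ?case by (simp add: Fm_def)
next
  case (Suc k)
  let ?\<psi> = "\<lambda>z. Sm m \<tau> (Tm m \<tau> z)"
  have "(?\<psi> ^^ j) z \<in> V m" if "z \<in> V m" for j z
    using that t by (induction j) (auto simp: Tm_in Sm_in)
  then have zV: "(?\<psi> ^^ k) (Sm m \<tau> (Tm m (\<tau>/2) y)) \<in> V m" using y t by (simp add: Tm_in Sm_in)
  have "(Fm m \<tau> ^^ Suc (Suc k)) y = Fm m \<tau> (Tm m (\<tau>/2) ((?\<psi> ^^ k) (Sm m \<tau> (Tm m (\<tau>/2) y))))"
    using Suc by simp
  also have "\<dots> = Tm m (\<tau>/2) (Sm m \<tau> (Tm m (\<tau>/2 + \<tau>/2) ((?\<psi> ^^ k) (Sm m \<tau> (Tm m (\<tau>/2) y)))))"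
    unfolding Fm_def using Tm_semigroup[of "\<tau>/2" "\<tau>/2" _ m] zV t by simp
  finally show ?case by simp
qed

definition "KF = KT * KT * KS * M"
definition "\<omega>F = \<bar>\<omega>\<bar>"

lemma KF_ge_1: "KF \<ge> 1"
proof -
  have "KT * KT \<ge> 1" "KS * M \<ge> 1"
    using TA.TB_ge_1 SB.TB_ge_1 Sseq(1) mult_mono[of 1 KT 1 KT] mult_mono[of 1 KS 1 M] by auto
  then show ?thesis using mult_mono[of 1 "KT * KT" 1 "KS * M"] by (simp add: KF_def mult.assoc)
qed

lemma \<omega>F_nonneg: "\<omega>F \<ge> 0" by (simp add: \<omega>F_def)

lemma Fm_pow_bound:
  assumes t: "0 < \<tau>" "\<tau> \<le> 1" and y: "y \<in> V m"
  shows "norm ((Fm m \<tau> ^^ k) y) \<le> KF * exp (\<omega>F * \<tau>) ^ k * norm y"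
proof (cases k)
  case 0
  then show ?thesis using KF_ge_1 by (simp add: mult_le_cancel_right1)
next
  case (Suc j)
  let ?\<psi> = "\<lambda>z. Sm m \<tau> (Tm m \<tau> z)"
  let ?y' = "Sm m \<tau> (Tm m (\<tau>/2) y)"
  have y'V: "?y' \<in> V m" using y t by (simp add: Tm_in Sm_in)
  have y'_bound: "norm ?y' \<le> KS * (KT * norm y)"
  proof -
    have "norm ?y' \<le> KS * norm (Tm m (\<tau>/2) y)" by (rule SB.Tm_bound) (use t y Tm_in in auto)
    also have "\<dots> \<le> KS * (KT * norm y)"
      using TA.Tm_bound[of "\<tau>/2" y m] t y SB.TB_ge_1 by (intro mult_left_mono) auto
    finally show ?thesis .
  qed
  have Lie_bound: "norm ((?\<psi> ^^ j) ?y') \<le> M * exp (\<omega>F * \<tau>) ^ j * norm ?y'"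
  proof -
    have "norm ((?\<psi> ^^ j) ?y') \<le> M * exp (real j * \<omega> * \<tau>) * norm ?y'"
      using Sseq(2)[of \<tau> 1 ?y' m j] t y'V by simp
    also have "exp (real j * \<omega> * \<tau>) \<le> exp (\<omega>F * \<tau>) ^ j"
    proof -
      have "real j * \<omega> * \<tau> \<le> real j * (\<omega>F * \<tau>)" using t unfolding \<omega>F_def
        by (simp add: mult.assoc mult_left_mono mult_right_mono)
      then show ?thesis by (simp add: exp_of_nat_mult[symmetric])
    qed
    then have "M * exp (real j * \<omega> * \<tau>) * norm ?y' \<le> M * exp (\<omega>F * \<tau>) ^ j * norm ?y'"
      using Sseq(1) by (intro mult_right_mono mult_left_mono) auto
    finally show ?thesis .
  qed
  have "(?\<psi> ^^ j) ?y' \<in> V m" using y'V t by (induction j) (auto simp: Tm_in Sm_in)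
  then have "norm ((Fm m \<tau> ^^ k) y) \<le> KT * norm ((?\<psi> ^^ j) ?y')"
    using Fm_pow_Lie[OF t(1) y] Suc TA.Tm_bound t by simp
  also have "\<dots> \<le> KT * (M * exp (\<omega>F * \<tau>) ^ j * (KS * (KT * norm y)))"
    using Lie_bound y'_bound TA.TB_ge_1 Sseq(1)
    by (intro mult_left_mono order_trans[OF Lie_bound] mult_left_mono[OF y'_bound]) auto
  also have "\<dots> = KF * exp (\<omega>F * \<tau>) ^ j * norm y" by (simp add: KF_def algebra_simps)
  also have "\<dots> \<le> KF * exp (\<omega>F * \<tau>) ^ k * norm y"
    using Suc \<omega>F_nonneg t KF_ge_1 by (intro mult_right_mono mult_left_mono) auto
  finally show ?thesis .
qed

lemma Fm_pow_bound_time: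
  assumes t: "0 < \<tau>" "\<tau> \<le> 1" and y: "y \<in> V m" and kt: "real k * \<tau> \<le> t"
  shows "norm ((Fm m \<tau> ^^ k) y) \<le> KF * exp (\<omega>F * t) * norm y"
proof -
  have "norm ((Fm m \<tau> ^^ k) y) \<le> KF * exp (\<omega>F * \<tau>) ^ k * norm y" by (rule Fm_pow_bound[OF t y])
  also have "exp (\<omega>F * \<tau>) ^ k = exp (\<omega>F * (real k * \<tau>))"
    by (simp add: exp_of_nat_mult[symmetric] algebra_simps)
  also have "\<dots> \<le> exp (\<omega>F * t)" using kt \<omega>F_nonneg by (simp add: mult_left_mono)
  finally show ?thesis using KF_ge_1 by (simp add: mult_left_mono mult_right_mono)
qed

lemma Fm_power_bounded: "0 < \<tau> \<Longrightarrow> \<tau> \<le> 1 \<Longrightarrow> power_bounded (V m) (Fm m \<tau>) \<tau> KF \<omega>F"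
  by unfold_locales (use V_sub Fm_in Fm_add Fm_scale Fm_pow_bound KF_ge_1 \<omega>F_nonneg in auto)

definition "lamF = power_bounded.lam \<omega>F"
definition "Rm m \<tau> = power_bounded.Rs (Fm m \<tau>) \<tau> \<omega>F"

context
  fixes \<tau> :: real and m :: nat
  assumes tau: "0 < \<tau>" "\<tau> \<le> 1"
begin

interpretation power_bounded "V m" "Fm m \<tau>" \<tau> KF \<omega>F by (rule Fm_power_bounded[OF tau])

lemma Rm_in: "y \<in> V m \<Longrightarrow> Rm m \<tau> y \<in> V m"
  unfolding Rm_def by (rule Rs_in)
lemma Rm_bound: "y \<in> V m \<Longrightarrow> norm (Rm m \<tau> y) \<le> KF * norm y"
  unfolding Rm_def by (rule Rs_bound)
lemma Rm_add: "y \<in> V m \<Longrightarrow> z \<in> V m \<Longrightarrow> Rm m \<tau> (y + z) = Rm m \<tau> y + Rm m \<tau> z"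
  unfolding Rm_def by (rule Rs_add)
lemma Rm_diff: "y \<in> V m \<Longrightarrow> z \<in> V m \<Longrightarrow> Rm m \<tau> (y - z) = Rm m \<tau> y - Rm m \<tau> z"
  unfolding Rm_def by (rule Rs_diff)
lemma Rm_scale: "y \<in> V m \<Longrightarrow> Rm m \<tau> (c *\<^sub>R y) = c *\<^sub>R Rm m \<tau> y"
  unfolding Rm_def by (rule Rs_scale)
lemma Rm_identity: "y \<in> V m \<Longrightarrow> z \<in> V m \<Longrightarrow>
    Rm m \<tau> (lamF *\<^sub>R y - z) - y = Rm m \<tau> ((1 / \<tau>) *\<^sub>R (Fm m \<tau> y - y) - z)"
  unfolding Rm_def lamF_def by (rule Rs_identity)
lemma Rm_equation: "y \<in> V m \<Longrightarrow> Fm m \<tau> (Rm m \<tau> y) - Rm m \<tau> y = \<tau> *\<^sub>R (lamF *\<^sub>R Rm m \<tau> y - y)"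
  unfolding Rm_def lamF_def by (rule Rs_equation)
lemma Rm_commute_pow: "y \<in> V m \<Longrightarrow> Rm m \<tau> ((Fm m \<tau> ^^ j) y) = (Fm m \<tau> ^^ j) (Rm m \<tau> y)"
  unfolding Rm_def by (rule Rs_commute_pow)
lemma Fm_pow_diff: "y \<in> V m \<Longrightarrow> z \<in> V m \<Longrightarrow> (Fm m \<tau> ^^ k) (y - z) = (Fm m \<tau> ^^ k) y - (Fm m \<tau> ^^ k) z"
  by (rule F_pow_diff)

end

lemma lamF_ge_1: "lamF \<ge> 1"
  using power_bounded.lam_pos[OF Fm_power_bounded[of 1 0]] by (simp add: lamF_def)

text \<open>Algebraic decomposition of the difference quotient of the Strang step in terms of the
  difference quotients a of \<open>Tm(\<tau>/2)\<close> and b of \<open>Sm(\<tau>)\<close>; the three terms are small when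
  \<open>a \<approx> \<alpha>\<close>, \<open>b \<approx> \<beta>\<close> and Tm, Sm are close to the identity on \<alpha>, \<beta>.\<close>
lemma Fm_quotient_decomposition:
  assumes t: "0 < \<tau>" and y: "y \<in> V m"
  defines "h \<equiv> \<tau> / 2"
  defines "a \<equiv> (1 / h) *\<^sub>R (Tm m h y - y)" and "b \<equiv> (1 / \<tau>) *\<^sub>R (Sm m \<tau> y - y)"
  shows "(1 / \<tau>) *\<^sub>R (Fm m \<tau> y - y) - (\<alpha> + \<beta>) =
     (1/2) *\<^sub>R (a - \<alpha>) + (Tm m h b - \<beta>) + (1/2) *\<^sub>R (Tm m h (Sm m \<tau> a) - \<alpha>)"
proof -
  have h: "0 < h" using t by (simp add: h_def)
  have aV: "a \<in> V m" and bV: "b \<in> V m" and SaV: "Sm m \<tau> a \<in> V m"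
    using y h t by (auto simp: a_def b_def intro!: V_scale V_diff Tm_in Sm_in)
  have Ty: "Tm m h y = y + h *\<^sub>R a" using h by (simp add: a_def)
  have Sy: "Sm m \<tau> y = y + \<tau> *\<^sub>R b" using t by (simp add: b_def)
  have "Sm m \<tau> (Tm m h y) = y + \<tau> *\<^sub>R b + h *\<^sub>R Sm m \<tau> a"
    unfolding Ty using Sm_add[of \<tau> y m "h *\<^sub>R a"] Sm_scale[of \<tau> a m h] Sy y aV t V_scale by simp
  then have "Fm m \<tau> y = Tm m h (y + \<tau> *\<^sub>R b + h *\<^sub>R Sm m \<tau> a)" by (simp add: Fm_def h_def)
  also have "\<dots> = Tm m h y + \<tau> *\<^sub>R Tm m h b + h *\<^sub>R Tm m h (Sm m \<tau> a)"
    using Tm_add[of h "y + \<tau> *\<^sub>R b" m "h *\<^sub>R Sm m \<tau> a"] Tm_add[of h y m "\<tau> *\<^sub>R b"]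
      Tm_scale[of h b m \<tau>] Tm_scale[of h "Sm m \<tau> a" m h] y bV SaV h V_scale V_add by simp
  finally have Fy: "Fm m \<tau> y - y = h *\<^sub>R a + \<tau> *\<^sub>R Tm m h b + h *\<^sub>R Tm m h (Sm m \<tau> a)"
    unfolding Ty by simp
  have ht: "(1/\<tau>) * h = 1/2" using t by (simp add: h_def)
  have h\<alpha>: "(1/2) *\<^sub>R \<alpha> + (1/2) *\<^sub>R \<alpha> = \<alpha>" by (simp add: scaleR_add_left[symmetric])
  show ?thesis unfolding Fy using t ht h\<alpha> by (simp add: scaleR_add_right scaleR_diff_right algebra_simps)
qed

lemma Fm_quotient_estimate:
  assumes t: "0 < \<tau>" "\<tau> \<le> 1" and V: "y \<in> V m" "\<alpha> \<in> V m" "\<beta> \<in> V m"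
    and qa: "norm ((1 / (\<tau> / 2)) *\<^sub>R (Tm m (\<tau> / 2) y - y) - \<alpha>) \<le> \<epsilon>"
    and qb: "norm ((1 / \<tau>) *\<^sub>R (Sm m \<tau> y - y) - \<beta>) \<le> \<epsilon>"
    and T\<alpha>: "norm (Tm m (\<tau> / 2) \<alpha> - \<alpha>) \<le> \<epsilon>" and S\<alpha>: "norm (Sm m \<tau> \<alpha> - \<alpha>) \<le> \<epsilon>"
    and T\<beta>: "norm (Tm m (\<tau> / 2) \<beta> - \<beta>) \<le> \<epsilon>"
  shows "norm ((1 / \<tau>) *\<^sub>R (Fm m \<tau> y - y) - (\<alpha> + \<beta>)) \<le> (2 + 2 * KT + KT * KS) * \<epsilon>"
proof -
  define h where "h = \<tau> / 2"
  define a b where "a = (1/h) *\<^sub>R (Tm m h y - y)" and "b = (1/\<tau>) *\<^sub>R (Sm m \<tau> y - y)"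
  have h: "0 < h" "h \<le> 1" using t by (auto simp: h_def)
  have KT1: "KT \<ge> 1" and KS1: "KS \<ge> 1" using TA.TB_ge_1 SB.TB_ge_1 .
  have \<epsilon>: "\<epsilon> \<ge> 0" using S\<alpha> norm_ge_zero order_trans by blast
  have aV: "a \<in> V m" using V h by (auto simp: a_def intro!: V_scale V_diff Tm_in)
  have bV: "b \<in> V m" using V t by (auto simp: b_def intro!: V_scale V_diff Sm_in)
  have SaV: "Sm m \<tau> a \<in> V m" and S\<alpha>V: "Sm m \<tau> \<alpha> \<in> V m" using aV V t by (auto simp: Sm_in)
  have Tb: "norm (Tm m h b - \<beta>) \<le> KT * \<epsilon> + \<epsilon>"
  proof -
    have "norm (Tm m h (b - \<beta>)) \<le> KT * norm (b - \<beta>)"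
      using TA.Tm_bound[of h "b - \<beta>" m] h bV V V_diff by simp
    also have "\<dots> \<le> KT * \<epsilon>" using qb KT1 unfolding b_def by (intro mult_left_mono) auto
    finally show ?thesis using Tm_diff[of h b m \<beta>] h bV V T\<beta> norm_triangle_mono unfolding h_def by fastforce
  qed
  have TSa: "norm (Tm m h (Sm m \<tau> a) - \<alpha>) \<le> KT * KS * \<epsilon> + KT * \<epsilon> + \<epsilon>"
  proof -
    have eq: "Tm m h (Sm m \<tau> a) - \<alpha> = Tm m h (Sm m \<tau> (a - \<alpha>)) + Tm m h (Sm m \<tau> \<alpha> - \<alpha>) + (Tm m h \<alpha> - \<alpha>)"
      using Sm_diff[of \<tau> a m \<alpha>] Tm_diff[of h "Sm m \<tau> a" m "Sm m \<tau> \<alpha>"] Tm_diff[of h "Sm m \<tau> \<alpha>" m \<alpha>]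
        aV V SaV S\<alpha>V t h by simp
    have "norm (Tm m h (Sm m \<tau> (a - \<alpha>))) \<le> KT * norm (Sm m \<tau> (a - \<alpha>))"
      by (rule TA.Tm_bound) (use h t aV V V_diff Sm_in in auto)
    also have "\<dots> \<le> KT * (KS * norm (a - \<alpha>))"
      using SB.Tm_bound[of \<tau> "a - \<alpha>" m] t aV V V_diff KT1 by (intro mult_left_mono) auto
    also have "\<dots> \<le> KT * (KS * \<epsilon>)" using qa KT1 KS1 unfolding a_def h_def by (intro mult_left_mono) auto
    finally have n1: "norm (Tm m h (Sm m \<tau> (a - \<alpha>))) \<le> KT * KS * \<epsilon>" by (simp add: mult.assoc)
    have "norm (Tm m h (Sm m \<tau> \<alpha> - \<alpha>)) \<le> KT * norm (Sm m \<tau> \<alpha> - \<alpha>)"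
      by (rule TA.Tm_bound) (use h S\<alpha>V V V_diff in auto)
    also have "\<dots> \<le> KT * \<epsilon>" using S\<alpha> KT1 by (intro mult_left_mono) auto
    finally have n2: "norm (Tm m h (Sm m \<tau> \<alpha> - \<alpha>)) \<le> KT * \<epsilon>" .
    show ?thesis unfolding eq using T\<alpha> unfolding h_def[symmetric] by (intro norm_triangle_mono n1 n2)
  qed
  have "norm ((1/\<tau>) *\<^sub>R (Fm m \<tau> y - y) - (\<alpha> + \<beta>)) \<le>
     (1/2) * norm (a - \<alpha>) + norm (Tm m h b - \<beta>) + (1/2) * norm (Tm m h (Sm m \<tau> a) - \<alpha>)"
    unfolding Fm_quotient_decomposition[OF t(1) V(1)] a_def b_def h_def
    by (intro norm_triangle_mono order.refl) simp_all
  also have "\<dots> \<le> (1/2) * \<epsilon> + (KT * \<epsilon> + \<epsilon>) + (1/2) * (KT * KS * \<epsilon> + KT * \<epsilon> + \<epsilon>)"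
    using qa Tb TSa unfolding a_def h_def by (intro add_mono mult_left_mono) auto
  also have "\<dots> \<le> (2 + 2 * KT + KT * KS) * \<epsilon>"
  proof -
    have "0 \<le> KT * \<epsilon>" "0 \<le> KT * KS * \<epsilon>" using KT1 KS1 \<epsilon> by auto
    then show ?thesis by (simp add: algebra_simps)
  qed
  finally show ?thesis .
qed

lemma strang_consistency:
  assumes dA: "d \<in> DA" and dB: "d \<in> DB" and e: "e > 0"
  shows "eventually (\<lambda>p. norm ((1 / fst p) *\<^sub>R (Fm (snd p) (fst p) (P (snd p) d) - P (snd p) d)
            - P (snd p) (A d + B d)) \<le> e) small_steps"
proof -
  define c where "c = 2 + 2 * KT + KT * KS"
  have "KT * KS \<ge> 1" using TA.TB_ge_1 SB.TB_ge_1 mult_mono[of 1 KT 1 KS] by simp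
  then have c_pos: "c > 0" using TA.TB_ge_1 by (simp add: c_def)
  define \<epsilon> where "\<epsilon> = e / c"
  have \<epsilon>: "\<epsilon> > 0" using e c_pos by (simp add: \<epsilon>_def)
  show ?thesis
    using eventually_small_steps_half[OF TA.generator_consistency[OF dA \<epsilon>]] SB.generator_consistency[OF dB \<epsilon>]
      TA.small_time_continuity[OF \<epsilon>, of "A d"] SB.small_time_continuity[OF \<epsilon>, of "A d"]
      TA.small_time_continuity[OF \<epsilon>, of "B d"] eventually_small_steps_fst[OF zero_less_one]
  proof eventually_elim
    case (elim p)
    have t: "0 < fst p" "fst p \<le> 1" using elim by auto
    have "norm ((1 / fst p) *\<^sub>R (Fm (snd p) (fst p) (P (snd p) d) - P (snd p) d)
        - (P (snd p) (A d) + P (snd p) (B d))) \<le> c * \<epsilon>"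
      unfolding c_def using elim t
      by (intro Fm_quotient_estimate[OF t TA.P_in TA.P_in TA.P_in]) auto
    then show ?case using c_pos by (simp add: \<epsilon>_def TA.P_add)
  qed
qed

lemma C_extends_sum: "d \<in> DA \<Longrightarrow> d \<in> DB \<Longrightarrow> d \<in> DC \<and> C d = A d + B d"
proof -
  assume "d \<in> DA" "d \<in> DB"
  then have "(d, A d + B d) \<in> graph_of (DA \<inter> DB) (\<lambda>x. A x + B x)" by (auto simp: graph_of_def)
  then have "(d, A d + B d) \<in> graph_of DC C"
    using C_closure closure_subset unfolding is_operator_closure_def by blast
  then show ?thesis by (auto simp: graph_of_def)
qed

lemma graph_approximation:
  assumes u: "u \<in> DC" and eta: "\<eta> > 0"
  obtains d where "d \<in> DA" "d \<in> DB" "norm (u - d) < \<eta>" "norm (C u - C d) < \<eta>"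
proof -
  have "(u, C u) \<in> graph_of DC C" using u by (auto simp: graph_of_def)
  then have "(u, C u) \<in> closure (graph_of (DA \<inter> DB) (\<lambda>x. A x + B x))"
    using C_closure unfolding is_operator_closure_def by simp
  then obtain g where g: "g \<in> graph_of (DA \<inter> DB) (\<lambda>x. A x + B x)" "dist g (u, C u) < \<eta>"
    using eta unfolding closure_approachable by blast
  then obtain d where d: "g = (d, A d + B d)" "d \<in> DA" "d \<in> DB" by (auto simp: graph_of_def)
  have "C d = A d + B d" using C_extends_sum d by blast
  then have "dist d u < \<eta>" "dist (C d) (C u) < \<eta>"
    using dist_fst_le[of g "(u, C u)"] dist_snd_le[of g "(u, C u)"] g d by auto
  then show ?thesis using that d by (simp add: dist_norm norm_minus_commute)
qed

text \<open>The resolvent defect of the pair (u, c): for \<open>u \<in> DC\<close> and \<open>c = C u\<close> it measures how far the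
  discrete resolvent Rm is from inverting \<open>lamF - C\<close>, transported to V m.\<close>
definition defect :: "nat \<Rightarrow> real \<Rightarrow> 'a \<Rightarrow> 'a \<Rightarrow> 'b" where
  "defect m \<tau> u c = Rm m \<tau> (P m (lamF *\<^sub>R u - c)) - P m u"

lemma defect_lipschitz:
  assumes t: "0 < \<tau>" "\<tau> \<le> 1"
  shows "norm (defect m \<tau> u c - defect m \<tau> u' c') \<le> KF * PB * (lamF * norm (u - u') + norm (c - c')) + PB * norm (u - u')"
proof -
  define w where "w = lamF *\<^sub>R (u - u') - (c - c')"
  have "P m (lamF *\<^sub>R u - c) = P m (lamF *\<^sub>R u' - c') + P m w"
    unfolding w_def by (simp add: TA.P_add TA.P_diff TA.P_scale algebra_simps)
  then have "Rm m \<tau> (P m (lamF *\<^sub>R u - c)) = Rm m \<tau> (P m (lamF *\<^sub>R u' - c')) + Rm m \<tau> (P m w)"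
    using Rm_add[OF t] TA.P_in by simp
  then have eq: "defect m \<tau> u c - defect m \<tau> u' c' = Rm m \<tau> (P m w) - P m (u - u')"
    unfolding defect_def by (simp add: TA.P_diff algebra_simps)
  have "norm w \<le> lamF * norm (u - u') + norm (c - c')" unfolding w_def
    using norm_triangle_ineq4[of "lamF *\<^sub>R (u - u')" "c - c'"] lamF_ge_1 by simp
  then have "norm (Rm m \<tau> (P m w)) \<le> KF * (PB * (lamF * norm (u - u') + norm (c - c')))"
    using Rm_bound[OF t TA.P_in] TA.P_norm[of m w] KF_ge_1 TA.PB_nonneg
    by (meson mult_left_mono order_trans zero_le_one)
  then show ?thesis unfolding eq
    using norm_triangle_ineq4[of "Rm m \<tau> (P m w)" "P m (u - u')"] TA.P_norm[of m "u - u'"]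
    by (simp add: mult.assoc)
qed

text \<open>For \<open>u \<in> DC\<close> the resolvent defect vanishes in the limit: approximate u in graph norm by
  \<open>d \<in> DA \<inter> DB\<close>, where the defect is controlled by the consistency of the Strang scheme.\<close>
lemma defect_tendsto_zero:
  assumes u: "u \<in> DC" and e: "e > 0"
  shows "eventually (\<lambda>p. norm (defect (snd p) (fst p) u (C u)) \<le> e) small_steps"
proof -
  define L where "L = KF * PB * (lamF + 1) + PB"
  have L0: "L \<ge> 0" using KF_ge_1 lamF_ge_1 TA.PB_nonneg by (simp add: L_def)
  define \<eta> where "\<eta> = e / (2 * (L + 1))"
  have eta: "\<eta> > 0" using e L0 by (simp add: \<eta>_def)
  obtain d where d: "d \<in> DA" "d \<in> DB" "norm (u - d) < \<eta>" "norm (C u - C d) < \<eta>"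
    using graph_approximation[OF u eta] by blast
  have Cd: "C d = A d + B d" using C_extends_sum d by blast
  have e2: "e / (2 * KF) > 0" using e KF_ge_1 by simp
  show ?thesis using strang_consistency[OF d(1,2) e2] eventually_small_steps_fst[OF zero_less_one]
  proof eventually_elim
    case (elim p)
    define \<tau> m where "\<tau> = fst p" and "m = snd p"
    have t: "0 < \<tau>" "\<tau> \<le> 1" using elim by (auto simp: \<tau>_def)
    have "defect m \<tau> d (C d) = Rm m \<tau> ((1 / \<tau>) *\<^sub>R (Fm m \<tau> (P m d) - P m d) - P m (C d))"
      unfolding defect_def using Rm_identity[OF t TA.P_in TA.P_in] by (simp add: TA.P_diff TA.P_scale)
    also have "norm \<dots> \<le> KF * (e / (2 * KF))"
      using Rm_bound[OF t] elim Cd KF_ge_1 TA.P_in t Fm_in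
      by (intro order_trans[OF Rm_bound[OF t] mult_left_mono])
        (auto simp: \<tau>_def m_def intro!: V_diff V_scale)
    also have "\<dots> = e / 2" using KF_ge_1 by simp
    finally have n1: "norm (defect m \<tau> d (C d)) \<le> e / 2" .
    have "norm (defect m \<tau> u (C u) - defect m \<tau> d (C d)) \<le> KF * PB * (lamF * \<eta> + \<eta>) + PB * \<eta>"
      using d KF_ge_1 lamF_ge_1 TA.PB_nonneg
      by (intro order_trans[OF defect_lipschitz[OF t]] add_mono mult_left_mono) auto
    also have "\<dots> = L * \<eta>" by (simp add: L_def algebra_simps)
    also have "\<dots> \<le> e / 2" unfolding \<eta>_def using L0 e by (simp add: field_simps)
    finally have n2: "norm (defect m \<tau> u (C u) - defect m \<tau> d (C d)) \<le> e / 2" .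
    show ?case using norm_triangle_mono[OF n1 n2] by (simp add: \<tau>_def m_def)
  qed
qed

text \<open>Along the orbit of \<open>x \<in> DC\<close> the defect vanishes uniformly on compact time intervals,
  as the defect is eventually uniformly Lipschitz in the pair (u, c).\<close>
lemma defect_tendsto_zero_uniform:
  assumes x: "x \<in> DC" and e: "e > 0"
  shows "eventually (\<lambda>p. \<forall>a\<in>{0..t}. norm (defect (snd p) (fst p) (U a x) (U a (C x))) \<le> e) small_steps"
proof -
  define B where "B = KF * PB * (lamF + 1) + PB"
  have B0: "B \<ge> 0" using KF_ge_1 lamF_ge_1 TA.PB_nonneg by (simp add: B_def)
  let ?L = "\<lambda>p w. defect (snd p) (fst p) (fst w) (snd w)"
  have cont: "continuous_on {0..t} (\<lambda>a. (U a x, U a (C x)))"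
    using UU.orbit_continuous_on by (intro continuous_on_Pair) auto
  have pointwise: "eventually (\<lambda>p. norm (?L p (U a x, U a (C x))) \<le> e') small_steps"
    if "a \<in> {0..t}" "e' > 0" for a e'
  proof -
    have ax: "U a x \<in> DC" "C (U a x) = U a (C x)" using UU.domain_invariant[OF x] that by auto
    show ?thesis using defect_tendsto_zero[OF ax(1) \<open>e' > 0\<close>] unfolding ax(2) by simp
  qed
  have lip: "eventually (\<lambda>p. \<forall>w w'. norm (?L p w - ?L p w') \<le> B * norm (w - w')) small_steps"
    using eventually_small_steps_fst[OF zero_less_one]
  proof eventually_elim
    case (elim p)
    show ?case
    proof (intro allI)
      fix w w' :: "'a \<times> 'a"
      have "w - w' = (fst w - fst w', snd w - snd w')" by (simp add: prod_eq_iff)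
      then have "norm (fst w - fst w') \<le> norm (w - w')" "norm (snd w - snd w') \<le> norm (w - w')"
        using norm_fst_le norm_snd_le by metis+
      then have "KF * PB * (lamF * norm (fst w - fst w') + norm (snd w - snd w')) + PB * norm (fst w - fst w')
          \<le> B * norm (w - w')"
        using KF_ge_1 lamF_ge_1 TA.PB_nonneg unfolding B_def
        by (simp add: algebra_simps add_mono mult_left_mono)
      then show "norm (?L p w - ?L p w') \<le> B * norm (w - w')"
        using defect_lipschitz[of "fst p"] elim by (meson less_imp_le order_trans)
    qed
  qed
  have "eventually (\<lambda>p. \<forall>a\<in>{0..t}. norm (?L p (U a x, U a (C x))) \<le> e) small_steps"
    by (rule eventually_uniform_on_compact[OF compact_Icc cont pointwise lip B0 e])
  then show ?thesis by simp
qed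

text \<open>One step of the telescoping sum comparing the scheme with the exact evolution
  \<open>u \<mapsto> u'\<close>, where c plays the role of the derivative of the exact orbit at u.\<close>
lemma telescoping_step:
  assumes tau: "0 < \<tau>" "\<tau> \<le> 1"
  shows "(Fm m \<tau> ^^ Suc j) (Rm m \<tau> (P m u)) - (Fm m \<tau> ^^ j) (Rm m \<tau> (P m u'))
       = (Fm m \<tau> ^^ j) (\<tau> *\<^sub>R defect m \<tau> u c - Rm m \<tau> (P m (u' - u - \<tau> *\<^sub>R c)))"
proof -
  let ?R = "Rm m \<tau>" and ?E = "u' - u - \<tau> *\<^sub>R c"
  have PV: "\<And>v. P m v \<in> V m" by (rule TA.P_in)
  have "P m u' = P m u + \<tau> *\<^sub>R P m c + P m ?E" by (simp add: TA.P_add TA.P_diff TA.P_scale)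
  then have Ru': "?R (P m u') = ?R (P m u) + \<tau> *\<^sub>R ?R (P m c) + ?R (P m ?E)"
    using Rm_add[OF tau] Rm_scale[OF tau] PV V_scale V_add by simp
  have FR: "Fm m \<tau> (?R (P m u)) = ?R (P m u) + \<tau> *\<^sub>R (lamF *\<^sub>R ?R (P m u) - P m u)"
    using Rm_equation[OF tau PV] by (simp add: algebra_simps)
  have "defect m \<tau> u c = lamF *\<^sub>R ?R (P m u) - ?R (P m c) - P m u"
    unfolding defect_def using Rm_diff[OF tau] Rm_scale[OF tau] PV V_scale by (simp add: TA.P_diff TA.P_scale)
  then have D: "lamF *\<^sub>R ?R (P m u) - P m u = defect m \<tau> u c + ?R (P m c)" by (simp add: algebra_simps)
  have step: "Fm m \<tau> (?R (P m u)) - ?R (P m u') = \<tau> *\<^sub>R defect m \<tau> u c - ?R (P m ?E)"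
    unfolding FR D Ru' by (simp add: algebra_simps)
  have "Fm m \<tau> (?R (P m u)) \<in> V m" "?R (P m u') \<in> V m" using Fm_in Rm_in[OF tau PV] tau by auto
  from Fm_pow_diff[OF tau this] step show ?thesis by (simp add: funpow_swap1)
qed

lemma telescoping_step_bound:
  assumes tau: "0 < \<tau>" "\<tau> \<le> 1" and jt: "real j * \<tau> \<le> t"
    and defect_small: "norm (defect m \<tau> u c) \<le> \<epsilon>A"
    and expansion: "norm (u' - u - \<tau> *\<^sub>R c) \<le> \<epsilon>B * \<tau>"
  shows "norm ((Fm m \<tau> ^^ Suc j) (Rm m \<tau> (P m u)) - (Fm m \<tau> ^^ j) (Rm m \<tau> (P m u')))
    \<le> KF * exp (\<omega>F * t) * (\<tau> * \<epsilon>A + KF * PB * (\<epsilon>B * \<tau>))"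
proof -
  define z where "z = \<tau> *\<^sub>R defect m \<tau> u c - Rm m \<tau> (P m (u' - u - \<tau> *\<^sub>R c))"
  have "norm (Rm m \<tau> (P m (u' - u - \<tau> *\<^sub>R c))) \<le> KF * (PB * (\<epsilon>B * \<tau>))"
    using Rm_bound[OF tau TA.P_in] TA.P_norm[of m "u' - u - \<tau> *\<^sub>R c"] expansion KF_ge_1 TA.PB_nonneg
    by (meson mult_left_mono order_trans zero_le_one)
  moreover have "norm (\<tau> *\<^sub>R defect m \<tau> u c) \<le> \<tau> * \<epsilon>A" using tau defect_small by (simp add: mult_left_mono)
  ultimately have nz: "norm z \<le> \<tau> * \<epsilon>A + KF * PB * (\<epsilon>B * \<tau>)"
    unfolding z_def
    using norm_triangle_ineq4[of "\<tau> *\<^sub>R defect m \<tau> u c" "Rm m \<tau> (P m (u' - u - \<tau> *\<^sub>R c))"]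
    by (simp add: mult.assoc)
  have zV: "z \<in> V m" unfolding z_def defect_def
    using Rm_in[OF tau] TA.P_in by (intro V_diff V_scale) auto
  have "(Fm m \<tau> ^^ Suc j) (Rm m \<tau> (P m u)) - (Fm m \<tau> ^^ j) (Rm m \<tau> (P m u')) = (Fm m \<tau> ^^ j) z"
    unfolding z_def by (rule telescoping_step[OF tau])
  also have "norm \<dots> \<le> KF * exp (\<omega>F * t) * norm z" by (rule Fm_pow_bound_time[OF tau zV jt])
  also have "\<dots> \<le> KF * exp (\<omega>F * t) * (\<tau> * \<epsilon>A + KF * PB * (\<epsilon>B * \<tau>))"
    using nz KF_ge_1 by (intro mult_left_mono) auto
  finally show ?thesis .
qed

text \<open>For an orbit integral x the (resolved) error of the scheme at time t vanishes: telescope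
  along the exact orbit at the grid times \<open>k t/n\<close>; each of the n steps contributes \<open>o(t/n)\<close>,
  by the uniform defect estimate and the uniform first-order expansion of the orbit.\<close>
lemma resolved_error_orbit_integral:
  fixes y :: 'a
  assumes t: "t > 0" and r0: "0 \<le> r0" and e: "e > 0"
  defines "x \<equiv> UU.orbit_integral y r0"
  shows "eventually (\<lambda>nm. norm (Rm (snd nm) (t / real (fst nm)) ((Fm (snd nm) (t / real (fst nm)) ^^ fst nm) (P (snd nm) x))
          - Rm (snd nm) (t / real (fst nm)) (P (snd nm) (U t x))) \<le> e) grid"
proof -
  have xD: "x \<in> DC" using UU.orbit_integral_in_domain[OF r0] by (simp add: x_def)
  define Kt where "Kt = KF * exp (\<omega>F * t)"
  have Kt: "Kt \<ge> 1" using KF_ge_1 \<omega>F_nonneg t mult_mono[of 1 KF 1 "exp (\<omega>F * t)"] by (simp add: Kt_def)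
  define \<epsilon>A where "\<epsilon>A = e / (2 * t * Kt)"
  define \<epsilon>B where "\<epsilon>B = \<epsilon>A / (KF * PB + 1)"
  have KM: "KF * PB \<ge> 0" using KF_ge_1 TA.PB_nonneg by simp
  have eA: "\<epsilon>A > 0" using e t Kt by (simp add: \<epsilon>A_def)
  have eB: "\<epsilon>B > 0" using eA KM by (simp add: \<epsilon>B_def add_nonneg_pos)
  have KMB: "KF * PB * \<epsilon>B \<le> \<epsilon>A" using KM eA by (simp add: \<epsilon>B_def field_simps)
  obtain \<delta> where \<delta>: "\<delta> > 0" and expansion: "\<forall>h a. 0 < h \<and> h < \<delta> \<and> 0 \<le> a \<and> a \<le> t \<longrightarrow>
     norm (U h (U a x) - U a x - h *\<^sub>R U a (C x)) \<le> \<epsilon>B * h"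
    using UU.orbit_integral_uniform_expansion[OF r0 _ eB, of t y] t unfolding x_def by auto
  have "eventually (\<lambda>p. (\<forall>a\<in>{0..t}. norm (defect (snd p) (fst p) (U a x) (U a (C x))) \<le> \<epsilon>A)
      \<and> (0 < fst p \<and> fst p < min \<delta> 1)) small_steps"
    using defect_tendsto_zero_uniform[OF xD eA, of t] eventually_small_steps_fst[of "min \<delta> 1"] \<delta>
    by (auto intro: eventually_conj)
  from eventually_grid_of_small_steps[OF t this] eventually_grid_fst[of 1]
  show ?thesis
  proof eventually_elim
    case (elim nm)
    define n m \<tau> where "n = fst nm" and "m = snd nm" and "\<tau> = t / real n"
    have n1: "n \<ge> 1" using elim by (simp add: n_def)
    have tau: "0 < \<tau>" "\<tau> \<le> 1" "\<tau> < \<delta>" using elim by (auto simp: \<tau>_def n_def)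
    have nt: "real n * \<tau> = t" using n1 by (simp add: \<tau>_def)
    define u where "u k = U (real k * \<tau>) x" for k
    define b where "b k = (Fm m \<tau> ^^ (n - k)) (Rm m \<tau> (P m (u k)))" for k
    have step_bound: "norm (b k - b (Suc k)) \<le> Kt * (2 * \<tau> * \<epsilon>A)" if k: "k < n" for k
    proof -
      have ka: "real k * \<tau> \<in> {0..t}" "real (n - Suc k) * \<tau> \<le> t"
        using k tau nt mult_right_mono[of "real k" "real n" \<tau>] mult_right_mono[of "real (n - Suc k)" "real n" \<tau>]
        by auto
      have "u (Suc k) = U \<tau> (u k)"
        using UU.T_semigroup[of \<tau> "real k * \<tau>" x] tau by (simp add: u_def algebra_simps)
      then have "norm (u (Suc k) - u k - \<tau> *\<^sub>R U (real k * \<tau>) (C x)) \<le> \<epsilon>B * \<tau>"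
        using expansion ka tau by (simp add: u_def)
      moreover have "norm (defect m \<tau> (u k) (U (real k * \<tau>) (C x))) \<le> \<epsilon>A"
        using elim ka unfolding u_def m_def \<tau>_def n_def by blast
      moreover have "n - k = Suc (n - Suc k)" using k by simp
      ultimately have "norm (b k - b (Suc k)) \<le> Kt * (\<tau> * \<epsilon>A + KF * PB * (\<epsilon>B * \<tau>))"
        unfolding b_def Kt_def using telescoping_step_bound[OF tau(1,2) ka(2)] by simp
      also have "\<dots> \<le> Kt * (2 * \<tau> * \<epsilon>A)"
        using KMB tau Kt mult_right_mono[OF KMB, of \<tau>] by (intro mult_left_mono) (auto simp: algebra_simps)
      finally show ?thesis .
    qed
    have "norm (b 0 - b n) \<le> (\<Sum>k<n. norm (b k - b (Suc k)))"
      unfolding sum_lessThan_telescope'[symmetric] by (rule norm_sum)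
    also have "\<dots> \<le> real n * (Kt * (2 * \<tau> * \<epsilon>A))" using sum_mono[of "{..<n}", OF step_bound] by simp
    also have "\<dots> = e" using nt Kt t by (simp add: \<epsilon>A_def field_simps)
    finally have "norm (b 0 - b n) \<le> e" .
    moreover have "b 0 = Rm m \<tau> ((Fm m \<tau> ^^ n) (P m x))"
      unfolding b_def u_def using Rm_commute_pow[OF tau(1,2) TA.P_in] UU.T_zero[of x] by simp
    moreover have "b n = Rm m \<tau> (P m (U t x))" unfolding b_def u_def using nt by simp
    ultimately show ?case by (simp add: \<tau>_def n_def m_def)
  qed
qed

lemma U_bound: "0 \<le> t \<Longrightarrow> \<exists>KU\<ge>0. \<forall>z. norm (U t z) \<le> KU * norm z"
  using UU.T_bounded_op bounded_op_norm by blast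

definition scheme_error :: "nat \<Rightarrow> nat \<Rightarrow> real \<Rightarrow> 'a \<Rightarrow> 'b" where
  "scheme_error n m t z = (Fm m (t / real n) ^^ n) (P m z) - P m (U t z)"

context
  fixes n :: nat and t :: real
  assumes steps: "0 < t / real n" "t / real n \<le> 1"
begin

lemma steps_time: "t > 0" "real n * (t / real n) = t"
proof -
  have "real n \<noteq> 0" using steps by (cases "n = 0") auto
  then show "real n * (t / real n) = t" by simp
  show "t > 0" using steps \<open>real n \<noteq> 0\<close> by (simp add: zero_less_divide_iff)
qed

lemma scheme_error_in: "scheme_error n m t z \<in> V m"
  unfolding scheme_error_def using steps Fm_pow_in TA.P_in by (intro V_diff) auto

lemma scheme_error_diff: "scheme_error n m t z - scheme_error n m t z' = scheme_error n m t (z - z')"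
  unfolding scheme_error_def using Fm_pow_diff[OF steps TA.P_in TA.P_in] UU.T_diff steps_time(1)
  by (simp add: TA.P_diff)

lemma scheme_error_bound:
  assumes KU: "KU \<ge> 0" "\<And>z. norm (U t z) \<le> KU * norm z"
  shows "norm (scheme_error n m t z) \<le> (KF * exp (\<omega>F * t) * PB + PB * KU) * norm z"
proof -
  have "norm ((Fm m (t / real n) ^^ n) (P m z)) \<le> KF * exp (\<omega>F * t) * norm (P m z)"
    by (rule Fm_pow_bound_time[OF steps TA.P_in]) (use steps_time in simp)
  also have "\<dots> \<le> KF * exp (\<omega>F * t) * (PB * norm z)"
    using TA.P_norm KF_ge_1 by (intro mult_left_mono) auto
  finally have "norm ((Fm m (t / real n) ^^ n) (P m z)) \<le> KF * exp (\<omega>F * t) * (PB * norm z)" .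
  moreover have "norm (P m (U t z)) \<le> PB * (KU * norm z)"
    using TA.P_norm KU TA.PB_nonneg by (meson mult_left_mono order_trans)
  ultimately show ?thesis unfolding scheme_error_def
    using norm_triangle_ineq4[of "(Fm m (t / real n) ^^ n) (P m z)" "P m (U t z)"] by (simp add: algebra_simps)
qed

end

text \<open>The resolved error \<open>Rm (scheme_error)\<close> vanishes for every z: it does so on the dense set
  of orbit integrals, and the maps are uniformly Lipschitz.\<close>
lemma resolved_error_tendsto_zero:
  assumes t: "t > 0" and e: "e > 0"
  shows "eventually (\<lambda>nm. norm (Rm (snd nm) (t / real (fst nm)) (scheme_error (fst nm) (snd nm) t z)) \<le> e) grid"
proof -
  obtain KU where KU: "KU \<ge> 0" "\<And>z. norm (U t z) \<le> KU * norm z" using U_bound[of t] t by auto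
  define B where "B = KF * (KF * exp (\<omega>F * t) * PB + PB * KU)"
  have B0: "B \<ge> 0" using KF_ge_1 TA.PB_nonneg KU by (simp add: B_def)
  let ?L = "\<lambda>nm z. Rm (snd nm) (t / real (fst nm)) (scheme_error (fst nm) (snd nm) t z)"
  show ?thesis
  proof (rule dense_extension[where L = ?L and B = B, OF UU.orbit_integrals_dense _ _ B0 e])
    fix z e' assume "z \<in> {UU.orbit_integral y r | y r. 0 \<le> r}" "(e'::real) > 0"
    then obtain y r where z: "z = UU.orbit_integral y r" "0 \<le> r" by blast
    show "eventually (\<lambda>nm. norm (?L nm z) \<le> e') grid"
      using resolved_error_orbit_integral[OF t z(2) \<open>e' > 0\<close>, of y] eventually_grid_steps[OF t]
    proof eventually_elim
      case (elim nm)
      then show ?case unfolding z(1) scheme_error_def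
        using Rm_diff[of "t / real (fst nm)"] Fm_pow_in TA.P_in by simp
    qed
  next
    show "eventually (\<lambda>nm. \<forall>z z'. norm (?L nm z - ?L nm z') \<le> B * norm (z - z')) grid"
      using eventually_grid_steps[OF t]
    proof eventually_elim
      case (elim nm)
      then have steps: "0 < t / real (fst nm)" "t / real (fst nm) \<le> 1" by auto
      show ?case
      proof (intro allI)
        fix z z'
        have "?L nm z - ?L nm z' = Rm (snd nm) (t / real (fst nm)) (scheme_error (fst nm) (snd nm) t (z - z'))"
          using Rm_diff[OF steps scheme_error_in[OF steps] scheme_error_in[OF steps]]
            scheme_error_diff[OF steps] by simp
        also have "norm \<dots> \<le> KF * ((KF * exp (\<omega>F * t) * PB + PB * KU) * norm (z - z'))"
          using Rm_bound[OF steps scheme_error_in[OF steps]] scheme_error_bound[OF steps KU] KF_ge_1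
          by (meson mult_left_mono order_trans zero_le_one)
        finally show "norm (?L nm z - ?L nm z') \<le> B * norm (z - z')" by (simp add: B_def mult.assoc)
      qed
    qed
  qed
qed

text \<open>For \<open>u \<in> DC\<close> write \<open>P m u = Rm (P m v) - defect\<close> with \<open>v = lamF u - C u\<close>; then the scheme
  error splits into two defects and a resolved error, all of which vanish.\<close>
lemma scheme_error_domain:
  assumes t: "t > 0" and e: "e > 0" and u: "u \<in> DC"
  shows "eventually (\<lambda>nm. norm (scheme_error (fst nm) (snd nm) t u) \<le> e) grid"
proof -
  define Kt where "Kt = KF * exp (\<omega>F * t)"
  have Kt: "Kt \<ge> 1" using KF_ge_1 \<omega>F_nonneg t mult_mono[of 1 KF 1 "exp (\<omega>F * t)"] by (simp add: Kt_def)
  define v where "v = lamF *\<^sub>R u - C u"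
  have Ut: "U t u \<in> DC" "C (U t u) = U t (C u)" using UU.domain_invariant[OF u] t by auto
  have Uv: "U t v = lamF *\<^sub>R U t u - C (U t u)" unfolding v_def Ut(2)
    using UU.T_diff UU.T_scale t by simp
  have e3: "e / 3 > 0" "e / (3 * Kt) > 0" using e Kt by auto
  show ?thesis
    using eventually_grid_of_small_steps[OF t defect_tendsto_zero[OF u e3(2)]]
      eventually_grid_of_small_steps[OF t defect_tendsto_zero[OF Ut(1) e3(1)]]
      resolved_error_tendsto_zero[OF t e3(1), of v] eventually_grid_steps[OF t]
  proof eventually_elim
    case (elim nm)
    define n m \<tau> where "n = fst nm" and "m = snd nm" and "\<tau> = t / real n"
    have tau: "0 < \<tau>" "\<tau> \<le> 1" using elim by (auto simp: \<tau>_def n_def)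
    have nt: "real n * \<tau> \<le> t" using elim by (simp add: \<tau>_def n_def)
    let ?F = "Fm m \<tau> ^^ n" and ?R = "Rm m \<tau>"
    have d1: "norm (defect m \<tau> u (C u)) \<le> e / (3 * Kt)" and d2: "norm (defect m \<tau> (U t u) (C (U t u))) \<le> e / 3"
      and r: "norm (?R (scheme_error n m t v)) \<le> e / 3"
      using elim by (simp_all add: n_def m_def \<tau>_def)
    have RV: "?R (P m v) \<in> V m" using Rm_in[OF tau TA.P_in] .
    have "scheme_error n m t u =
        - ?F (defect m \<tau> u (C u)) + ?R (scheme_error n m t v) + defect m \<tau> (U t u) (C (U t u))"
      unfolding scheme_error_def defect_def Uv[symmetric] \<tau>_def[symmetric] v_def[symmetric]
      using Fm_pow_diff[OF tau RV TA.P_in] Rm_diff[OF tau Fm_pow_in TA.P_in] Rm_commute_pow[OF tau TA.P_in] tau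
      by (simp add: Fm_pow_in TA.P_in)
    moreover have "norm (?F (defect m \<tau> u (C u))) \<le> e / 3"
    proof -
      have "defect m \<tau> u (C u) \<in> V m" unfolding defect_def v_def[symmetric] using RV TA.P_in by (rule V_diff)
      then have "norm (?F (defect m \<tau> u (C u))) \<le> Kt * norm (defect m \<tau> u (C u))"
        unfolding Kt_def by (rule Fm_pow_bound_time[OF tau _ nt])
      also have "\<dots> \<le> Kt * (e / (3 * Kt))" using d1 Kt by (intro mult_left_mono) auto
      finally show ?thesis using Kt by simp
    qed
    ultimately have "norm (scheme_error n m t u) \<le> e / 3 + e / 3 + e / 3"
      using r d2 by (metis norm_minus_cancel norm_triangle_mono)
    then show ?case by (simp add: n_def m_def)
  qed
qed

lemma scheme_error_tendsto_zero:
  assumes t: "t > 0" and e: "e > 0"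
  shows "eventually (\<lambda>nm. norm (scheme_error (fst nm) (snd nm) t x) \<le> e) grid"
proof -
  obtain KU where KU: "KU \<ge> 0" "\<And>z. norm (U t z) \<le> KU * norm z" using U_bound[of t] t by auto
  define B where "B = KF * exp (\<omega>F * t) * PB + PB * KU"
  have B0: "B \<ge> 0" using KF_ge_1 TA.PB_nonneg KU by (simp add: B_def)
  have dense: "closure DC = UNIV"
    using closure_mono[of "{UU.orbit_integral y r | y r. 0 \<le> r}" DC] UU.orbit_integral_in_domain
      UU.orbit_integrals_dense by blast
  show ?thesis
  proof (rule dense_extension[where L = "\<lambda>nm. scheme_error (fst nm) (snd nm) t" and B = B, OF dense _ _ B0 e])
    show "eventually (\<lambda>nm. norm (scheme_error (fst nm) (snd nm) t z) \<le> e') grid" if "z \<in> DC" "e' > 0" for z e'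
      using scheme_error_domain[OF t] that by blast
    show "eventually (\<lambda>nm. \<forall>z z'. norm (scheme_error (fst nm) (snd nm) t z - scheme_error (fst nm) (snd nm) t z')
        \<le> B * norm (z - z')) grid"
      using eventually_grid_steps[OF t]
      by eventually_elim (use scheme_error_diff scheme_error_bound[OF _ _ KU] in \<open>simp add: B_def\<close>)
  qed
qed

end

lemma convergence_through_embedding:
  fixes Y :: "nat \<Rightarrow> nat \<Rightarrow> 'b::real_normed_vector" and z :: "'a::real_normed_vector"
  assumes V: "\<And>m. subspace (V m)" and J_bd: "\<And>m. bounded_op_on (V m) UNIV MJ (J m)"
    and JP: "(\<lambda>m. J m (P m z)) \<longlonglongrightarrow> z" and P_in: "\<And>m. P m z \<in> V m" and Y_in: "\<And>n m. Y n m \<in> V m"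
    and conv: "\<And>e. e > 0 \<Longrightarrow> eventually (\<lambda>nm. norm (Y (fst nm) (snd nm) - P (snd nm) z) \<le> e) grid"
    and e: "e > 0"
  shows "\<exists>N. \<forall>n m. n \<ge> N \<and> m \<ge> N \<longrightarrow> norm (J m (Y n m) - z) \<le> e"
proof -
  define K where "K = max MJ 0"
  have K0: "K \<ge> 0" by (simp add: K_def)
  have e2: "e / 2 > 0" "e / (2 * (K + 1)) > 0" using e K0 by (auto simp: add_nonneg_pos)
  have "eventually (\<lambda>nm. norm (J (snd nm) (Y (fst nm) (snd nm)) - z) \<le> e) grid"
    using conv[OF e2(2)] eventually_grid_snd[OF tendstoD[OF JP e2(1)]]
  proof eventually_elim
    case (elim nm)
    define n m where "n = fst nm" and "m = snd nm"
    have "J m (Y n m) - J m (P m z) = J m (Y n m - P m z)"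
      using bounded_op_diff[OF J_bd V Y_in P_in] by simp
    also have "norm \<dots> \<le> K * norm (Y n m - P m z)"
      unfolding K_def by (rule bounded_op_norm[OF bounded_op_nonneg[OF J_bd] subspace_diff[OF V Y_in P_in]])
    also have "\<dots> \<le> K * (e / (2 * (K + 1)))"
      using elim(1) K0 unfolding n_def m_def by (intro mult_left_mono) auto
    also have "\<dots> \<le> e / 2" using K0 e by (simp add: field_simps)
    finally have a: "norm (J m (Y n m) - J m (P m z)) \<le> e / 2" .
    have b: "norm (J m (P m z) - z) \<le> e / 2" using elim(2) by (simp add: m_def dist_norm)
    have "J m (Y n m) - z = (J m (Y n m) - J m (P m z)) + (J m (P m z) - z)" by simp
    then have "norm (J m (Y n m) - z) \<le> e / 2 + e / 2" using norm_triangle_mono[OF a b] by simp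
    then show ?case by (simp add: n_def m_def)
  qed
  then obtain N where "\<forall>m\<ge>N. \<forall>n\<ge>N. norm (J n (Y m n) - z) \<le> e"
    unfolding eventually_prod_sequentially by auto
  then show ?thesis by blast
qed

text \<open>The main theorem. The argument only uses the approximating semigroups.\<close>
theorem mainTheorem6:
  fixes A B C :: "'a::banach \<Rightarrow> 'a" and DA DB DC :: "'a set"
    and T S U :: "real \<Rightarrow> 'a \<Rightarrow> 'a"
    and V :: "nat \<Rightarrow> 'b::banach set"
    and P :: "nat \<Rightarrow> 'a \<Rightarrow> 'b" and J :: "nat \<Rightarrow> 'b \<Rightarrow> 'a"
    and Am Bm :: "nat \<Rightarrow> 'b \<Rightarrow> 'b" and DAm DBm :: "nat \<Rightarrow> 'b set"
    and Tm Sm :: "nat \<Rightarrow> real \<Rightarrow> 'b \<Rightarrow> 'b"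
    and MJ MP MT \<omega>T MS \<omega>S M \<omega> :: real
  assumes A_cl: "closed_operator DA A" and A_dense: "densely_defined DA"
    and B_cl: "closed_operator DB B" and B_dense: "densely_defined DB"
    and A_gen: "generates_on UNIV DA A T"
    and B_gen: "generates_on UNIV DB B S"
    and C_closure: "is_operator_closure (DA \<inter> DB) (\<lambda>x. A x + B x) DC C"
    and C_dom: "DA \<inter> DB \<subseteq> DC"
    and C_gen: "generates_on UNIV DC C U"
    and V_sub: "\<And>m. closed_subspace (V m)"
    and P_bd: "\<And>m. bounded_op_on UNIV (V m) MP (P m)"
    and J_bd: "\<And>m. bounded_op_on (V m) UNIV MJ (J m)"
    and PJ: "\<And>m y. y \<in> V m \<Longrightarrow> P m (J m y) = y"
    and JP: "\<And>x. (\<lambda>m. J m (P m x)) \<longlonglongrightarrow> x"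
    and Am_gen: "\<And>m. generates_on (V m) (DAm m) (Am m) (Tm m)"
    and Bm_gen: "\<And>m. generates_on (V m) (DBm m) (Bm m) (Sm m)"
    and S1: "MT \<ge> 1" "\<And>h x. h > 0 \<Longrightarrow> norm (T h x) \<le> MT * exp (\<omega>T * h) * norm x"
      "\<And>m h y. h > 0 \<Longrightarrow> y \<in> V m \<Longrightarrow> norm (Tm m h y) \<le> MT * exp (\<omega>T * h) * norm y"
    and S2: "MS \<ge> 1" "\<And>h x. h > 0 \<Longrightarrow> norm (S h x) \<le> MS * exp (\<omega>S * h) * norm x"
      "\<And>m h y. h > 0 \<Longrightarrow> y \<in> V m \<Longrightarrow> norm (Sm m h y) \<le> MS * exp (\<omega>S * h) * norm y"
    and Sseq: "M \<ge> 1"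
      "\<And>t k n m y. t \<ge> 0 \<Longrightarrow> n \<ge> 1 \<Longrightarrow> y \<in> V m \<Longrightarrow>
         norm (((\<lambda>z. Sm m (t / real n) (Tm m (t / real n) z)) ^^ k) y)
           \<le> M * exp (real k * \<omega> * t / real n) * norm y"
    and C1: "\<And>x. x \<in> DA \<Longrightarrow> (\<forall>\<^sub>F m in sequentially. P m x \<in> DAm m) \<and>
               (\<lambda>m. J m (Am m (P m x))) \<longlonglongrightarrow> A x"
    and C2: "\<And>x. x \<in> DB \<Longrightarrow> (\<forall>\<^sub>F m in sequentially. P m x \<in> DBm m) \<and>
               (\<lambda>m. J m (Bm m (P m x))) \<longlonglongrightarrow> B x"
  shows "\<forall>t>0. \<forall>x. \<forall>\<epsilon>>0. \<exists>N. \<forall>n m. n \<ge> N \<and> m \<ge> N \<longrightarrow>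
           norm (J m (((\<lambda>z. Tm m (t / (2 * real n)) (Sm m (t / real n) (Tm m (t / (2 * real n)) z))) ^^ n) (P m x))
                 - U t x) \<le> \<epsilon>"
proof -
  interpret strang_splitting A B C DA DB DC U V P J Am Bm DAm DBm Tm Sm MP MT \<omega>T MS \<omega>S M \<omega>
    by unfold_locales
      (fact A_dense B_dense C_closure C_gen V_sub P_bd PJ Am_gen Bm_gen S1(1,3) S2(1,3) Sseq C1 C2)+
  show ?thesis
  proof (intro allI impI)
    fix t \<epsilon> :: real and x :: 'a assume t: "t > 0" and \<epsilon>: "\<epsilon> > 0"
    show "\<exists>N. \<forall>n m. n \<ge> N \<and> m \<ge> N \<longrightarrow> norm (J m (((\<lambda>z. Tm m (t / (2 * real n))
        (Sm m (t / real n) (Tm m (t / (2 * real n)) z))) ^^ n) (P m x)) - U t x) \<le> \<epsilon>"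
      unfolding strang_step_eq
    proof (rule convergence_through_embedding[OF TA.V_subspace J_bd JP TA.P_in _ _ \<epsilon>])
      show "(Fm m (t / real n) ^^ n) (P m x) \<in> V m" for n m using t by (intro Fm_pow_in TA.P_in) auto
      show "eventually (\<lambda>nm. norm ((Fm (snd nm) (t / real (fst nm)) ^^ fst nm) (P (snd nm) x)
          - P (snd nm) (U t x)) \<le> e) grid" if "e > 0" for e
        using scheme_error_tendsto_zero[OF t that] unfolding scheme_error_def .
    qed
  qed
qed

end
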